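(* Let $\mathcal{H}$ be a finite-dimensional Hilbert space, $T:\mathcal{B}(\mathcal{H})\to\mathcal{B}(\mathcal{H})$ a channel, and let $E:\mathcal{B}(\mathcal{H}^{\otimes n})\to\mathcal{B}(\mathcal{H}^{\otimes m})$ and $D:\mathcal{B}(\mathcal{H}^{\otimes m})\to\mathcal{B}(\mathcal{H}^{\otimes n})$ be encoding and decoding channels (coding $m$ systems into $n$ systems) which correct $f$ errors. Suppose that $$\|T-\mathrm{id}\|_{cb}\le\frac{f+1}{n-f-1}.$$ Then $$\|E\,T^{\otimes n}D-\mathrm{id}\|_{cb}\le\|T-\mathrm{id}\|_{cb}^{\,f+1}\;2^{nH_2((f+1)/n)},$$ where $H_2(r)=-r\log_2r-(1-r)\log_2(1-r)$.
   Context: A channel is a completely positive unital linear map between operator algebras $\mathcal{B}(\cdot)$ of finite-dimensional Hilbert spaces (Heisenberg picture); $\mathrm{id}$ denotes the identity map. The cb-norm of a linear map $S:\mathcal{B}(\mathcal{K}_2)\to\mathcal{B}(\mathcal{K}_1)$ is $\|S\|_{cb}=\sup\{\|(S\otimes\mathrm{id}_{\mathcal{B}(\mathbb{C}^k)})(A)\|:k\in\mathbb{N},\ A\in\mathcal{B}(\mathcal{K}_2\otimes\mathbb{C}^k),\ \|A\|\le1\}$. The pair $(E,D)$ corrects $f$ errors if $E(T_1\otimes\cdots\otimes T_n)D=\mathrm{id}$ for all channels $T_1,\dots,T_n:\mathcal{B}(\mathcal{H})\to\mathcal{B}(\mathcal{H})$ such that $T_i\neq\mathrm{id}$ for at most $f$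 indices $i$. *)

theory Defs
  imports Complex_Main "Jordan_Normal_Form.Matrix"
begin

text \<open>B(C^a) is represented by complex a x a matrices (carrier_mat a a).
  A linear map S : B(C^a) -> B(C^b) is a function on matrices, considered on carrier_mat a a.
  H^{tensor n} is C^(d^n), with Kronecker ordering (first factor most significant).\<close>

definition vnorm :: "complex vec \<Rightarrow> real" where
  "vnorm v = sqrt (\<Sum>i<dim_vec v. (cmod (v $ i))^2)"

definition opnorm :: "complex mat \<Rightarrow> real" where
  "opnorm A = Sup {vnorm (A *\<^sub>v v) | v. dim_vec v = dim_col A \<and> vnorm v \<le> 1}"

definition eunit :: "nat \<Rightarrow> nat \<Rightarrow> nat \<Rightarrow> complex mat" where
  "eunit a i j = mat a a (\<lambda>(r,s). if r = i \<and> s = j then 1 else 0)"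

text \<open>Tensor product S (x) R of linear maps S : B(C^a1) -> B(C^b1), R : B(C^a2) -> B(C^b2),
  acting on B(C^a1 (x) C^a2) = B(C^(a1*a2)), defined by linear extension of
  (S (x) R)(E_ij (x) E_kl) = S(E_ij) (x) R(E_kl).\<close>
definition map_tensor ::
  "nat \<Rightarrow> nat \<Rightarrow> nat \<Rightarrow> nat \<Rightarrow> (complex mat \<Rightarrow> complex mat) \<Rightarrow> (complex mat \<Rightarrow> complex mat)
    \<Rightarrow> complex mat \<Rightarrow> complex mat" where
  "map_tensor a1 b1 a2 b2 S R A = mat (b1*b2) (b1*b2) (\<lambda>(p,q).
     \<Sum>i<a1. \<Sum>j<a1. \<Sum>k<a2. \<Sum>l<a2.
       A $$ (i*a2 + k, j*a2 + l) * S (eunit a1 i j) $$ (p div b2, q div b2)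
         * R (eunit a2 k l) $$ (p mod b2, q mod b2))"

definition lin_map :: "nat \<Rightarrow> nat \<Rightarrow> (complex mat \<Rightarrow> complex mat) \<Rightarrow> bool" where
  "lin_map a b S \<longleftrightarrow> (\<forall>A \<in> carrier_mat a a. S A \<in> carrier_mat b b) \<and>
     (\<forall>A \<in> carrier_mat a a. \<forall>B \<in> carrier_mat a a. S (A + B) = S A + S B) \<and>
     (\<forall>A \<in> carrier_mat a a. \<forall>c. S (c \<cdot>\<^sub>m A) = c \<cdot>\<^sub>m S A)"

definition psd :: "nat \<Rightarrow> complex mat \<Rightarrow> bool" where
  "psd N A \<longleftrightarrow> A \<in> carrier_mat N N \<and>
     (\<forall>v. dim_vec v = N \<longrightarrow>
        (let z = (\<Sum>i<N. cnj (v $ i) * (A *\<^sub>v v) $ i) in Im z = 0 \<and> Re z \<ge> 0))"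

definition completely_positive :: "nat \<Rightarrow> nat \<Rightarrow> (complex mat \<Rightarrow> complex mat) \<Rightarrow> bool" where
  "completely_positive a b S \<longleftrightarrow>
     (\<forall>k>0. \<forall>A. psd (a*k) A \<longrightarrow> psd (b*k) (map_tensor a b k k S (\<lambda>X. X) A))"

text \<open>Channel B(C^a) -> B(C^b) (Heisenberg picture): completely positive unital linear map.\<close>
definition channel :: "nat \<Rightarrow> nat \<Rightarrow> (complex mat \<Rightarrow> complex mat) \<Rightarrow> bool" where
  "channel a b S \<longleftrightarrow> lin_map a b S \<and> completely_positive a b S \<and> S (1\<^sub>m a) = 1\<^sub>m b"

definition cb_norm :: "nat \<Rightarrow> nat \<Rightarrow> (complex mat \<Rightarrow> complex mat) \<Rightarrow> real" where
  "cb_norm a b S = Sup {opnorm (map_tensor a b k k S (\<lambda>X. X) A) | k A.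
      k > 0 \<and> A \<in> carrier_mat (a*k) (a*k) \<and> opnorm A \<le> 1}"

fun tensor_list :: "nat \<Rightarrow> (complex mat \<Rightarrow> complex mat) list \<Rightarrow> complex mat \<Rightarrow> complex mat" where
  "tensor_list d [] = (\<lambda>X. X)"
| "tensor_list d (T # Ts) = map_tensor d d (d ^ length Ts) (d ^ length Ts) T (tensor_list d Ts)"

definition tensor_pow :: "nat \<Rightarrow> (complex mat \<Rightarrow> complex mat) \<Rightarrow> nat \<Rightarrow> complex mat \<Rightarrow> complex mat" where
  "tensor_pow d T n = tensor_list d (replicate n T)"

definition corrects :: "nat \<Rightarrow> nat \<Rightarrow> nat \<Rightarrow> nat \<Rightarrow> (complex mat \<Rightarrow> complex mat)
    \<Rightarrow> (complex mat \<Rightarrow> complex mat) \<Rightarrow> bool" where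
  "corrects d m n f E D \<longleftrightarrow>
     (\<forall>Ts. length Ts = n \<longrightarrow> (\<forall>T \<in> set Ts. channel d d T) \<longrightarrow>
        card {i. i < n \<and> \<not> (\<forall>A \<in> carrier_mat d d. (Ts ! i) A = A)} \<le> f \<longrightarrow>
        (\<forall>A \<in> carrier_mat (d^m) (d^m). E (tensor_list d Ts (D A)) = A))"

text \<open>Binary entropy (with 0 log 0 = 0, automatic since 0 * _ = 0).\<close>
definition H2 :: "real \<Rightarrow> real" where
  "H2 r = - r * log 2 r - (1 - r) * log 2 (1 - r)"

end

theory Submission
  imports Defs "HOL-Analysis.L2_Norm"
begin

text \<open>Write \<open>T = id + \<Delta>\<close> with \<open>\<Delta> = T - id\<close> and expand \<open>T\<^sup>\<otimes>\<^sup>n\<close> into the \<open>2\<^sup>n\<close> tensor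
  products with \<open>\<Delta>\<close> on a set \<open>S\<close> of positions and \<open>id\<close> elsewhere. If \<open>0 < |S| \<le> f\<close>, the
  decoded term \<open>E (\<dots>) D\<close> vanishes: replacing one \<open>\<Delta>\<close> by \<open>T\<close> or by \<open>id\<close> gives two products
  with at most \<open>f\<close> non-identity channels, which \<open>(E, D)\<close> corrects to the same value. Hence
  \<open>E T\<^sup>\<otimes>\<^sup>n D - id\<close> is the sum of the decoded terms with \<open>|S| > f\<close>. Channels are complete
  contractions (\<open>[[1, A], [A\<^sup>*, 1]]\<close> is positive iff \<open>\<parallel>A\<parallel> \<le> 1\<close>) and cb-norms are
  submultiplicative under composition and tensor products, so with \<open>x = \<parallel>\<Delta>\<parallel>\<^sub>c\<^sub>b\<close> the
  cb-norm is at most \<open>\<Sum>j>f. (n choose j) * x ^ j\<close>. For \<open>x \<le> (f+1)/(n-f-1)\<close> a Chernoff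
  estimate bounds this binomial tail by \<open>x ^ (f+1) * 2 powr (n * H2 ((f+1)/n))\<close>.\<close>

section \<open>Finite sums and index arithmetic\<close>

lemma mult_add_less: "i < a \<Longrightarrow> r < m \<Longrightarrow> i*m + r < a*m" for i a r m :: nat
proof -
  assume "i < a" "r < m"
  then have "i*m + m \<le> a*m" by (metis Suc_leI add.commute mult_Suc mult_le_mono1)
  then show ?thesis using \<open>r < m\<close> by linarith
qed

lemma mult_add_eq_iff:
  "r < k \<Longrightarrow> r' < k \<Longrightarrow> i*k + r = j*k + r' \<longleftrightarrow> i = j \<and> r = r'" for i j k r r' :: nat
  by (metis div_mult_self1 div_less mod_mult_self1 mod_less add.commute add_0 less_zeroE
      linorder_neqE_nat)

lemma sum_lessThan_add:
  fixes g :: "nat \<Rightarrow> 'a::comm_monoid_add"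
  shows "(\<Sum>x<n+m. g x) = (\<Sum>x<n. g x) + (\<Sum>y<m. g (n+y))"
  by (induction m) (simp_all add: add.assoc)

lemma sum_lessThan_mult:
  fixes g :: "nat \<Rightarrow> 'a::comm_monoid_add"
  shows "(\<Sum>P<c*m. g P) = (\<Sum>p<c. \<Sum>y<m. g (p*m + y))"
proof (induction c)
  case (Suc c)
  have "(\<Sum>P<Suc c * m. g P) = (\<Sum>P<c*m + m. g P)" by (simp add: add.commute)
  also have "\<dots> = (\<Sum>P<c*m. g P) + (\<Sum>y<m. g (c*m + y))" by (rule sum_lessThan_add)
  finally show ?case using Suc.IH by (simp add: add.commute)
qed simp

lemma sum_sum_delta:
  fixes g :: "nat \<Rightarrow> nat \<Rightarrow> 'a::semiring_1"
  assumes "r0 < k" "s0 < k"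
  shows "(\<Sum>r<k. \<Sum>s<k. g r s * (if r0 = r \<and> s0 = s then 1 else 0)) = g r0 s0"
proof -
  have "(\<Sum>r<k. \<Sum>s<k. g r s * (if r0 = r \<and> s0 = s then 1 else 0))
      = (\<Sum>r<k. if r0 = r then g r s0 else 0)"
    by (intro sum.cong refl) (use assms in \<open>auto simp: if_distrib cong: if_cong\<close>)
  also have "\<dots> = g r0 s0" using assms by simp
  finally show ?thesis .
qed

lemma sum_sum_diag:
  fixes x y :: "nat \<Rightarrow> 'a::semiring_1"
  shows "(\<Sum>P<n. \<Sum>Q<n. x P * (if P = Q then 1 else 0) * y Q) = (\<Sum>P<n. x P * y P)"
proof -
  have "\<And>P Q. x P * (if P = Q then 1 else 0) * y Q = (if P = Q then x P * y Q else 0)" by simp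
  then show ?thesis by (simp add: sum.delta)
qed

lemma sum_swap_3:
  "(\<Sum>i\<in>I. \<Sum>j\<in>J. \<Sum>t\<in>U. f i j t) = (\<Sum>t\<in>U. \<Sum>i\<in>I. \<Sum>j\<in>J. f i j t)"
proof -
  have "(\<Sum>i\<in>I. \<Sum>j\<in>J. \<Sum>t\<in>U. f i j t) = (\<Sum>i\<in>I. \<Sum>t\<in>U. \<Sum>j\<in>J. f i j t)"
    by (rule sum.cong[OF refl]) (rule sum.swap)
  also have "\<dots> = (\<Sum>t\<in>U. \<Sum>i\<in>I. \<Sum>j\<in>J. f i j t)" by (rule sum.swap)
  finally show ?thesis .
qed

lemma sum_swap_nested:
  "(\<Sum>u\<in>U. \<Sum>v\<in>V. \<Sum>i\<in>I. \<Sum>j\<in>J. f u v i j) = (\<Sum>i\<in>I. \<Sum>j\<in>J. \<Sum>u\<in>U. \<Sum>v\<in>V. f u v i j)"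
proof -
  have "(\<Sum>u\<in>U. \<Sum>v\<in>V. \<Sum>i\<in>I. \<Sum>j\<in>J. f u v i j) = (\<Sum>u\<in>U. \<Sum>i\<in>I. \<Sum>v\<in>V. \<Sum>j\<in>J. f u v i j)"
    by (rule sum.cong[OF refl]) (rule sum.swap)
  also have "\<dots> = (\<Sum>i\<in>I. \<Sum>u\<in>U. \<Sum>v\<in>V. \<Sum>j\<in>J. f u v i j)" by (rule sum.swap)
  also have "\<dots> = (\<Sum>i\<in>I. \<Sum>u\<in>U. \<Sum>j\<in>J. \<Sum>v\<in>V. f u v i j)"
    by (rule sum.cong[OF refl], rule sum.cong[OF refl]) (rule sum.swap)
  also have "\<dots> = (\<Sum>i\<in>I. \<Sum>j\<in>J. \<Sum>u\<in>U. \<Sum>v\<in>V. f u v i j)"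
    by (rule sum.cong[OF refl]) (rule sum.swap)
  finally show ?thesis .
qed

section \<open>Euclidean and operator norms\<close>

definition seq_norm :: "nat \<Rightarrow> (nat \<Rightarrow> complex) \<Rightarrow> real" where
  "seq_norm N x = L2_set (\<lambda>i. cmod (x i)) {..<N}"

definition seq_inner :: "nat \<Rightarrow> (nat \<Rightarrow> complex) \<Rightarrow> (nat \<Rightarrow> complex) \<Rightarrow> complex" where
  "seq_inner N x y = (\<Sum>i<N. cnj (x i) * y i)"

lemma vnorm_eq_seq_norm: "vnorm v = seq_norm (dim_vec v) (\<lambda>i. v $ i)"
  unfolding vnorm_def seq_norm_def L2_set_def by simp

lemma seq_norm_nonneg [simp]: "0 \<le> seq_norm N x"
  unfolding seq_norm_def by simp

lemma vnorm_nonneg [simp]: "0 \<le> vnorm v"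
  unfolding vnorm_eq_seq_norm by simp

lemma seq_norm_cong: "(\<And>i. i < N \<Longrightarrow> x i = y i) \<Longrightarrow> seq_norm N x = seq_norm N y"
  unfolding seq_norm_def by (rule L2_set_cong) auto

lemma seq_inner_le_norms: "cmod (seq_inner N x y) \<le> seq_norm N x * seq_norm N y"
proof -
  have "cmod (seq_inner N x y) \<le> (\<Sum>i<N. cmod (cnj (x i) * y i))"
    unfolding seq_inner_def by (rule norm_sum)
  also have "\<dots> = (\<Sum>i<N. \<bar>cmod (x i)\<bar> * \<bar>cmod (y i)\<bar>)"
    by (simp add: norm_mult)
  also have "\<dots> \<le> seq_norm N x * seq_norm N y"
    unfolding seq_norm_def by (rule L2_set_mult_ineq)
  finally show ?thesis .
qed

lemma seq_inner_self: "seq_inner N x x = complex_of_real ((seq_norm N x)\<^sup>2)"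
proof -
  have "seq_inner N x x = (\<Sum>i<N. complex_of_real ((cmod (x i))\<^sup>2))"
    unfolding seq_inner_def by (intro sum.cong refl) (metis complex_norm_square mult.commute)
  also have "\<dots> = complex_of_real (\<Sum>i<N. (cmod (x i))\<^sup>2)" by simp
  also have "(\<Sum>i<N. (cmod (x i))\<^sup>2) = (seq_norm N x)\<^sup>2"
    unfolding seq_norm_def L2_set_def by (simp add: sum_nonneg)
  finally show ?thesis .
qed

lemma seq_norm_sum_le:
  assumes "finite I"
  shows "seq_norm N (\<lambda>i. \<Sum>s\<in>I. g s i) \<le> (\<Sum>s\<in>I. seq_norm N (g s))"
  using assms
proof (induction I rule: finite_induct)
  case empty
  then show ?case unfolding seq_norm_def by (simp add: L2_set_def)
next
  case (insert a I)
  have "seq_norm N (\<lambda>i. \<Sum>s\<in>insert a I. g s i) = seq_norm N (\<lambda>i. g a i + (\<Sum>s\<in>I. g s i))"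
    using insert by simp
  also have "\<dots> \<le> L2_set (\<lambda>i. cmod (g a i) + cmod (\<Sum>s\<in>I. g s i)) {..<N}"
    unfolding seq_norm_def by (rule L2_set_mono) (auto intro: norm_triangle_ineq)
  also have "\<dots> \<le> seq_norm N (g a) + seq_norm N (\<lambda>i. \<Sum>s\<in>I. g s i)"
    unfolding seq_norm_def by (rule L2_set_triangle_ineq)
  also have "\<dots> \<le> seq_norm N (g a) + (\<Sum>s\<in>I. seq_norm N (g s))"
    using insert by simp
  finally show ?case using insert by simp
qed

lemma seq_norm_scale: "seq_norm N (\<lambda>i. c * x i) = cmod c * seq_norm N x"
  unfolding seq_norm_def by (simp add: norm_mult L2_set_right_distrib)

lemma seq_norm_reindex_le:
  assumes "inj_on s {..<N}" "s ` {..<N} \<subseteq> {..<M}"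
  shows "seq_norm N (\<lambda>i. x (s i)) \<le> seq_norm M x"
proof -
  have "seq_norm N (\<lambda>i. x (s i)) = sqrt (\<Sum>i\<in>s ` {..<N}. (cmod (x i))\<^sup>2)"
    unfolding seq_norm_def L2_set_def
    using sum.reindex[OF assms(1), of "\<lambda>i. (cmod (x i))\<^sup>2"] by simp
  also have "\<dots> \<le> sqrt (\<Sum>i<M. (cmod (x i))\<^sup>2)"
    using assms(2) by (intro real_sqrt_le_mono sum_mono2) auto
  finally show ?thesis unfolding seq_norm_def L2_set_def .
qed

lemma seq_norm_reindex_eq:
  assumes "inj_on s {..<N}" "s ` {..<N} \<subseteq> {..<M}"
    and "\<And>j. j < M \<Longrightarrow> j \<notin> s ` {..<N} \<Longrightarrow> x j = 0"
  shows "seq_norm N (\<lambda>i. x (s i)) = seq_norm M x"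
proof -
  have "seq_norm N (\<lambda>i. x (s i)) = sqrt (\<Sum>i\<in>s ` {..<N}. (cmod (x i))\<^sup>2)"
    unfolding seq_norm_def L2_set_def
    using sum.reindex[OF assms(1), of "\<lambda>i. (cmod (x i))\<^sup>2"] by simp
  also have "(\<Sum>i\<in>s ` {..<N}. (cmod (x i))\<^sup>2) = (\<Sum>i<M. (cmod (x i))\<^sup>2)"
    using assms(2,3) by (intro sum.mono_neutral_left) auto
  finally show ?thesis unfolding seq_norm_def L2_set_def .
qed

lemma seq_norm_eq_0D: "seq_norm N x = 0 \<Longrightarrow> i < N \<Longrightarrow> x i = 0"
  unfolding seq_norm_def using L2_set_eq_0_iff[of "{..<N}" "\<lambda>i. cmod (x i)"] by auto

lemma seq_norm_le_sum: "seq_norm N x \<le> (\<Sum>i<N. cmod (x i))"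
  unfolding seq_norm_def by (rule L2_set_le_sum) simp

lemma norm_le_seq_norm: "i < N \<Longrightarrow> cmod (x i) \<le> seq_norm N x"
  unfolding seq_norm_def by (rule member_le_L2_set) auto

lemma mult_mat_vec_index:
  assumes "i < dim_row A" "dim_vec v = dim_col A"
  shows "(A *\<^sub>v v) $ i = (\<Sum>j<dim_col A. A $$ (i,j) * v $ j)"
  using assms by (simp add: index_mult_mat_vec scalar_prod_def atLeast0LessThan)

declare index_mult_mat_vec [simp del]

lemma vnorm_mult_mat_vec:
  assumes "dim_vec v = dim_col A"
  shows "vnorm (A *\<^sub>v v) = seq_norm (dim_row A) (\<lambda>i. \<Sum>j<dim_col A. A $$ (i,j) * v $ j)"
  unfolding vnorm_eq_seq_norm dim_mult_mat_vec
  by (intro seq_norm_cong) (metis mult_mat_vec_index assms)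

lemma vnorm_mult_mat_vec_le_entries:
  assumes "dim_vec v = dim_col A"
  shows "vnorm (A *\<^sub>v v) \<le> (\<Sum>i<dim_row A. \<Sum>j<dim_col A. cmod (A $$ (i,j))) * vnorm v"
proof -
  have entry: "cmod (v $ j) \<le> vnorm v" if "j < dim_col A" for j
    unfolding vnorm_eq_seq_norm using assms that by (intro norm_le_seq_norm) auto
  have "vnorm (A *\<^sub>v v) \<le> (\<Sum>i<dim_row A. cmod (\<Sum>j<dim_col A. A $$ (i,j) * v $ j))"
    unfolding vnorm_mult_mat_vec[OF assms] by (rule seq_norm_le_sum)
  also have "\<dots> \<le> (\<Sum>i<dim_row A. \<Sum>j<dim_col A. cmod (A $$ (i,j)) * vnorm v)"
    by (intro sum_mono order.trans[OF norm_sum])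
      (simp add: norm_mult entry mult_left_mono)
  also have "\<dots> = (\<Sum>i<dim_row A. \<Sum>j<dim_col A. cmod (A $$ (i,j))) * vnorm v"
    by (simp add: sum_distrib_right)
  finally show ?thesis .
qed

definition opnorm_values :: "complex mat \<Rightarrow> real set" where
  "opnorm_values A = {vnorm (A *\<^sub>v v) | v. dim_vec v = dim_col A \<and> vnorm v \<le> 1}"

lemma opnorm_eq_Sup: "opnorm A = Sup (opnorm_values A)"
  unfolding opnorm_def opnorm_values_def ..

lemma bdd_above_opnorm_values: "bdd_above (opnorm_values A)"
proof
  let ?K = "\<Sum>i<dim_row A. \<Sum>j<dim_col A. cmod (A $$ (i,j))"
  fix x assume "x \<in> opnorm_values A"
  then obtain v where v: "x = vnorm (A *\<^sub>v v)" "dim_vec v = dim_col A" "vnorm v \<le> 1"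
    unfolding opnorm_values_def by auto
  have "x \<le> ?K * vnorm v" using vnorm_mult_mat_vec_le_entries[OF v(2)] v(1) by simp
  also have "\<dots> \<le> ?K" using v(3) by (simp add: mult_left_le sum_nonneg)
  finally show "x \<le> ?K" .
qed

lemma vnorm_zero_vec [simp]: "vnorm (0\<^sub>v n) = 0"
  by (simp add: vnorm_def)

lemma zero_in_opnorm_values: "0 \<in> opnorm_values A"
proof -
  have "A *\<^sub>v 0\<^sub>v (dim_col A) = 0\<^sub>v (dim_row A)"
    by (intro eq_vecI) (simp_all add: mult_mat_vec_index)
  then show ?thesis
    unfolding opnorm_values_def by (intro CollectI exI[of _ "0\<^sub>v (dim_col A)"]) simp
qed

lemma opnorm_nonneg [simp]: "0 \<le> opnorm A"
  unfolding opnorm_eq_Sup by (rule cSup_upper[OF zero_in_opnorm_values bdd_above_opnorm_values])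

lemma vnorm_mult_le_opnorm:
  "dim_vec v = dim_col A \<Longrightarrow> vnorm v \<le> 1 \<Longrightarrow> vnorm (A *\<^sub>v v) \<le> opnorm A"
  unfolding opnorm_eq_Sup
  by (rule cSup_upper[OF _ bdd_above_opnorm_values]) (auto simp: opnorm_values_def)

lemma opnorm_leI:
  assumes "\<And>v. dim_vec v = dim_col A \<Longrightarrow> vnorm v \<le> 1 \<Longrightarrow> vnorm (A *\<^sub>v v) \<le> K"
  shows "opnorm A \<le> K"
  unfolding opnorm_eq_Sup
  by (rule cSup_least) (use zero_in_opnorm_values assms in \<open>auto simp: opnorm_values_def\<close>)

lemma vnorm_mult_mat_vec_le:
  assumes "dim_vec v = dim_col A"
  shows "vnorm (A *\<^sub>v v) \<le> opnorm A * vnorm v"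
proof (cases "vnorm v = 0")
  case True
  then have "\<And>j. j < dim_col A \<Longrightarrow> v $ j = 0"
    unfolding vnorm_eq_seq_norm using assms seq_norm_eq_0D by force
  then have "vnorm (A *\<^sub>v v) = 0"
    unfolding vnorm_mult_mat_vec[OF assms] seq_norm_def L2_set_def by simp
  then show ?thesis using True by simp
next
  case False
  define t where "t = vnorm v"
  have t: "t > 0" using False vnorm_nonneg[of v] unfolding t_def by linarith
  define w where "w = vec (dim_col A) (\<lambda>j. v $ j / t)"
  have dw: "dim_vec w = dim_col A" unfolding w_def by simp
  have "vnorm w = seq_norm (dim_col A) (\<lambda>i. (1 / t) * v $ i)"
    unfolding vnorm_eq_seq_norm[of w] dw by (rule seq_norm_cong) (simp add: w_def)
  also have "\<dots> = cmod (1 / t) * vnorm v"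
    unfolding seq_norm_scale using assms by (simp add: vnorm_eq_seq_norm)
  finally have "vnorm w = 1" using t by (simp add: t_def norm_divide)
  then have "vnorm (A *\<^sub>v w) \<le> opnorm A" using vnorm_mult_le_opnorm[OF dw] by simp
  moreover have "vnorm (A *\<^sub>v w) = cmod (1 / t) * vnorm (A *\<^sub>v v)"
    unfolding vnorm_mult_mat_vec[OF dw] vnorm_mult_mat_vec[OF assms] seq_norm_scale[symmetric]
    by (intro seq_norm_cong) (simp add: w_def sum_distrib_left sum_divide_distrib)
  ultimately show ?thesis using t by (simp add: norm_divide divide_le_eq mult.commute t_def)
qed

lemma opnorm_le_boundI:
  assumes "0 \<le> K" "\<And>v. dim_vec v = dim_col A \<Longrightarrow> vnorm (A *\<^sub>v v) \<le> K * vnorm v"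
  shows "opnorm A \<le> K"
proof (rule opnorm_leI)
  fix v assume "dim_vec v = dim_col A" "vnorm v \<le> 1"
  then show "vnorm (A *\<^sub>v v) \<le> K"
    using assms(2)[of v] assms(1) mult_left_le[of "vnorm v" K] by simp
qed

lemma seq_norm_mult_le:
  assumes A: "A \<in> carrier_mat n m"
  shows "seq_norm n (\<lambda>P. \<Sum>Q<m. A $$ (P,Q) * y Q) \<le> opnorm A * seq_norm m y"
proof -
  define yv where "yv = vec m y"
  have dyv: "dim_vec yv = dim_col A" using A unfolding yv_def by simp
  have "seq_norm n (\<lambda>P. \<Sum>Q<m. A $$ (P,Q) * y Q) = vnorm (A *\<^sub>v yv)"
    unfolding vnorm_mult_mat_vec[OF dyv] using A by (simp, intro seq_norm_cong) (simp add: yv_def)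
  also have "\<dots> \<le> opnorm A * vnorm yv" by (rule vnorm_mult_mat_vec_le[OF dyv])
  also have "vnorm yv = seq_norm m y" unfolding vnorm_eq_seq_norm yv_def by (simp, intro seq_norm_cong) simp
  finally show ?thesis .
qed

lemma opnorm_submatrix_le:
  fixes A B :: "complex mat"
  assumes B: "B \<in> carrier_mat RB CB" and A: "A \<in> carrier_mat RA CA"
    and s: "inj_on s {..<RB}" "s ` {..<RB} \<subseteq> {..<RA}"
    and t: "inj_on t {..<CB}" "t ` {..<CB} \<subseteq> {..<CA}"
    and eq: "\<And>x y. x < RB \<Longrightarrow> y < CB \<Longrightarrow> B $$ (x,y) = A $$ (s x, t y)"
  shows "opnorm B \<le> opnorm A"
proof (rule opnorm_le_boundI[OF opnorm_nonneg])
  fix v :: "complex vec" assume dv: "dim_vec v = dim_col B"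
  then have dv': "dim_vec v = CB" using B by simp
  define w where
    "w = vec CA (\<lambda>y'. if y' \<in> t ` {..<CB} then v $ (inv_into {..<CB} t y') else 0)"
  have dw: "dim_vec w = dim_col A" using A unfolding w_def by simp
  have wt: "\<And>i. i < CB \<Longrightarrow> w $ t i = v $ i"
    unfolding w_def using t by (auto simp: inv_into_f_f)
  have "vnorm v = seq_norm CB (\<lambda>i. w $ t i)"
    unfolding vnorm_eq_seq_norm dv' by (rule seq_norm_cong) (simp add: wt)
  also have "\<dots> = vnorm w"
    using dw A by (simp add: vnorm_eq_seq_norm, intro seq_norm_reindex_eq[OF t]) (auto simp: w_def)
  finally have vw: "vnorm v = vnorm w" .
  have entry: "(B *\<^sub>v v) $ x = (A *\<^sub>v w) $ (s x)" if x: "x < RB" for x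
  proof -
    have sx: "s x < RA" using s x by auto
    have "(B *\<^sub>v v) $ x = (\<Sum>y<CB. A $$ (s x, t y) * w $ t y)"
      using mult_mat_vec_index[of x B v] x B dv by (simp add: eq wt)
    also have "\<dots> = (\<Sum>y'\<in>t ` {..<CB}. A $$ (s x, y') * w $ y')"
      using sum.reindex[OF t(1), of "\<lambda>y'. A $$ (s x, y') * w $ y'"] by simp
    also have "\<dots> = (\<Sum>y'<CA. A $$ (s x, y') * w $ y')"
      using t(2) by (intro sum.mono_neutral_left) (auto simp: w_def)
    also have "\<dots> = (A *\<^sub>v w) $ (s x)"
      using mult_mat_vec_index[of "s x" A w] sx A dw by simp
    finally show ?thesis .
  qed
  have "vnorm (B *\<^sub>v v) = seq_norm RB (\<lambda>x. (A *\<^sub>v w) $ (s x))"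
    unfolding vnorm_eq_seq_norm using B by (simp, intro seq_norm_cong) (simp add: entry)
  also have "\<dots> \<le> seq_norm RA (\<lambda>x. (A *\<^sub>v w) $ x)" by (rule seq_norm_reindex_le[OF s])
  also have "\<dots> \<le> opnorm A * vnorm w"
    using A vnorm_mult_mat_vec_le[OF dw] by (simp add: vnorm_eq_seq_norm)
  finally show "vnorm (B *\<^sub>v v) \<le> opnorm A * vnorm v" using vw by simp
qed

lemma opnorm_lincomb_le:
  fixes M :: "complex mat"
  assumes M: "M \<in> carrier_mat R C" and I: "finite I"
    and G: "\<And>s. s \<in> I \<Longrightarrow> G s \<in> carrier_mat R C"
    and eq: "\<And>x y. x < R \<Longrightarrow> y < C \<Longrightarrow> M $$ (x,y) = (\<Sum>s\<in>I. c s * G s $$ (x,y))"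
  shows "opnorm M \<le> (\<Sum>s\<in>I. cmod (c s) * opnorm (G s))"
proof (rule opnorm_le_boundI)
  show "0 \<le> (\<Sum>s\<in>I. cmod (c s) * opnorm (G s))" by (intro sum_nonneg) simp
next
  fix v :: "complex vec" assume dv: "dim_vec v = dim_col M"
  then have dv': "dim_vec v = C" using M by simp
  have entry: "(M *\<^sub>v v) $ x = (\<Sum>s\<in>I. c s * (G s *\<^sub>v v) $ x)" if x: "x < R" for x
  proof -
    have "(M *\<^sub>v v) $ x = (\<Sum>y<C. \<Sum>s\<in>I. c s * (G s $$ (x,y) * v $ y))"
      using mult_mat_vec_index[of x M v] x M dv
      by (simp add: eq sum_distrib_right mult.assoc)
    also have "\<dots> = (\<Sum>s\<in>I. c s * (\<Sum>y<C. G s $$ (x,y) * v $ y))"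
      by (subst sum.swap) (simp add: sum_distrib_left)
    also have "\<dots> = (\<Sum>s\<in>I. c s * (G s *\<^sub>v v) $ x)"
      using mult_mat_vec_index[of x _ v] G x dv' by (intro sum.cong refl) force
    finally show ?thesis .
  qed
  have "vnorm (M *\<^sub>v v) = seq_norm R (\<lambda>x. \<Sum>s\<in>I. c s * (G s *\<^sub>v v) $ x)"
    unfolding vnorm_eq_seq_norm using M by (simp, intro seq_norm_cong) (simp add: entry)
  also have "\<dots> \<le> (\<Sum>s\<in>I. seq_norm R (\<lambda>x. c s * (G s *\<^sub>v v) $ x))"
    by (rule seq_norm_sum_le[OF I])
  also have "\<dots> = (\<Sum>s\<in>I. cmod (c s) * vnorm (G s *\<^sub>v v))"
    by (intro sum.cong refl) (use G in \<open>auto simp: seq_norm_scale vnorm_eq_seq_norm\<close>)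
  also have "\<dots> \<le> (\<Sum>s\<in>I. cmod (c s) * (opnorm (G s) * vnorm v))"
    by (intro sum_mono mult_left_mono vnorm_mult_mat_vec_le) (use G dv' in force)+
  also have "\<dots> = (\<Sum>s\<in>I. cmod (c s) * opnorm (G s)) * vnorm v"
    by (simp add: sum_distrib_right mult.assoc)
  finally show "vnorm (M *\<^sub>v v) \<le> (\<Sum>s\<in>I. cmod (c s) * opnorm (G s)) * vnorm v" .
qed

lemma opnorm_zero [simp]: "opnorm (0\<^sub>m n n) = 0"
  using opnorm_lincomb_le[of "0\<^sub>m n n" n n "{}"] opnorm_nonneg[of "0\<^sub>m n n"] by simp

lemma opnorm_smult_le: "X \<in> carrier_mat R C \<Longrightarrow> opnorm (s \<cdot>\<^sub>m X) \<le> cmod s * opnorm X"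
  using opnorm_lincomb_le[of "s \<cdot>\<^sub>m X" R C "{0::nat}" "\<lambda>_. X" "\<lambda>_. s"] by simp

section \<open>Linear maps and their amplifications\<close>

abbreviation amplify :: "nat \<Rightarrow> nat \<Rightarrow> nat \<Rightarrow> (complex mat \<Rightarrow> complex mat) \<Rightarrow> complex mat \<Rightarrow> complex mat" where
  "amplify a b k L \<equiv> map_tensor a b k k L (\<lambda>X. X)"

lemma map_tensor_carrier [simp]: "map_tensor a1 b1 a2 b2 S R A \<in> carrier_mat (b1*b2) (b1*b2)"
  unfolding map_tensor_def by simp

lemma map_tensor_dims [simp]:
  "dim_row (map_tensor a1 b1 a2 b2 S R A) = b1*b2" "dim_col (map_tensor a1 b1 a2 b2 S R A) = b1*b2"
  unfolding map_tensor_def by simp_all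

lemma index_eunit: "r < a \<Longrightarrow> s < a \<Longrightarrow> eunit a i j $$ (r,s) = (if r = i \<and> s = j then 1 else 0)"
  unfolding eunit_def by simp

lemma eunit_carrier [simp]: "eunit a i j \<in> carrier_mat a a"
  unfolding eunit_def by simp

lemma amplify_index:
  assumes "P < b*k" "Q < b*k"
  shows "amplify a b k L A $$ (P,Q) =
    (\<Sum>i<a. \<Sum>j<a. A $$ (i*k + P mod k, j*k + Q mod k) * L (eunit a i j) $$ (P div k, Q div k))"
proof -
  have k: "0 < k" using assms by (cases k) auto
  have "amplify a b k L A $$ (P,Q) =
    (\<Sum>i<a. \<Sum>j<a. \<Sum>r<k. \<Sum>s<k. (A $$ (i*k + r, j*k + s) * L (eunit a i j) $$ (P div k, Q div k))
        * (if P mod k = r \<and> Q mod k = s then 1 else 0))"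
    unfolding map_tensor_def using assms k by (simp add: index_eunit cong: if_cong)
  also have "\<dots> = (\<Sum>i<a. \<Sum>j<a. A $$ (i*k + P mod k, j*k + Q mod k) * L (eunit a i j) $$ (P div k, Q div k))"
    by (intro sum.cong refl sum_sum_delta) (use k in auto)
  finally show ?thesis .
qed

lemma lin_map_expand:
  assumes S: "lin_map a b S" and X: "X \<in> carrier_mat a a" and pq: "p < b" "q < b"
  shows "S X $$ (p,q) = (\<Sum>i<a. \<Sum>j<a. X $$ (i,j) * S (eunit a i j) $$ (p,q))"
proof -
  define XF where "XF F = mat a a (\<lambda>(r,s). if (r,s) \<in> F then X $$ (r,s) else 0)" for F
  have Sc: "\<And>A. A \<in> carrier_mat a a \<Longrightarrow> S A \<in> carrier_mat b b"
   and Sa: "\<And>A B. A \<in> carrier_mat a a \<Longrightarrow> B \<in> carrier_mat a a \<Longrightarrow> S (A + B) = S A + S B"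
   and Ss: "\<And>A c. A \<in> carrier_mat a a \<Longrightarrow> S (c \<cdot>\<^sub>m A) = c \<cdot>\<^sub>m S A"
    using S unfolding lin_map_def by auto
  have XFc: "XF F \<in> carrier_mat a a" for F unfolding XF_def by simp
  have main: "S (XF F) $$ (p,q) = (\<Sum>x\<in>F. X $$ x * S (eunit a (fst x) (snd x)) $$ (p,q))"
    if "finite F" "F \<subseteq> {..<a} \<times> {..<a}" for F
    using that
  proof (induction F rule: finite_induct)
    case empty
    have "XF {} = 0 \<cdot>\<^sub>m (0\<^sub>m a a)" unfolding XF_def by (intro eq_matI) auto
    then have "S (XF {}) = 0 \<cdot>\<^sub>m S (0\<^sub>m a a)" using Ss[of "0\<^sub>m a a" 0] by simp
    then show ?case using Sc[of "0\<^sub>m a a"] pq by simp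
  next
    case (insert x F)
    obtain i j where x: "x = (i,j)" by force
    have "XF (insert x F) = XF F + X $$ (i,j) \<cdot>\<^sub>m eunit a i j"
      unfolding XF_def x using insert x by (intro eq_matI) (auto simp: eunit_def)
    then have "S (XF (insert x F)) = S (XF F) + X $$ (i,j) \<cdot>\<^sub>m S (eunit a i j)"
      using Sa[OF XFc, of "X $$ (i,j) \<cdot>\<^sub>m eunit a i j" F] Ss[of "eunit a i j"] by simp
    then show ?case using insert x pq Sc[OF XFc, of F] Sc[of "eunit a i j"] by simp
  qed
  have "XF ({..<a} \<times> {..<a}) = X" unfolding XF_def using X by (intro eq_matI) auto
  then show ?thesis
    using main[of "{..<a} \<times> {..<a}"] by (simp add: sum.cartesian_product split_beta)
qed

lemma lin_map_entry_diff:
  assumes E: "lin_map N M E"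
    and Y: "Y \<in> carrier_mat N N" "Y1 \<in> carrier_mat N N" "Y0 \<in> carrier_mat N N"
    and eq: "\<And>a b. a < N \<Longrightarrow> b < N \<Longrightarrow> Y $$ (a,b) = Y1 $$ (a,b) - Y0 $$ (a,b)"
    and pq: "p < M" "q < M"
  shows "E Y $$ (p,q) = E Y1 $$ (p,q) - E Y0 $$ (p,q)"
  unfolding lin_map_expand[OF E Y(1) pq] lin_map_expand[OF E Y(2) pq] lin_map_expand[OF E Y(3) pq]
  by (simp add: eq sum_subtractf[symmetric] algebra_simps)

lemma lin_map_entry_sum:
  assumes E: "lin_map N M E" and Y: "Y \<in> carrier_mat N N" "\<And>s. s \<in> I \<Longrightarrow> Ys s \<in> carrier_mat N N"
    and eq: "\<And>a b. a < N \<Longrightarrow> b < N \<Longrightarrow> Y $$ (a,b) = (\<Sum>s\<in>I. Ys s $$ (a,b))"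
    and pq: "p < M" "q < M"
  shows "E Y $$ (p,q) = (\<Sum>s\<in>I. E (Ys s) $$ (p,q))"
proof -
  have "E Y $$ (p,q) = (\<Sum>a<N. \<Sum>b<N. \<Sum>s\<in>I. Ys s $$ (a,b) * E (eunit N a b) $$ (p,q))"
    unfolding lin_map_expand[OF E Y(1) pq] by (simp add: eq sum_distrib_right)
  also have "\<dots> = (\<Sum>s\<in>I. \<Sum>a<N. \<Sum>b<N. Ys s $$ (a,b) * E (eunit N a b) $$ (p,q))"
    by (rule sum_swap_3)
  also have "\<dots> = (\<Sum>s\<in>I. E (Ys s) $$ (p,q))"
    using Y(2) by (intro sum.cong refl lin_map_expand[OF E _ pq, symmetric])
  finally show ?thesis .
qed

lemma lin_map_unital_diag_sum:
  assumes E: "lin_map a b E" and u: "E (1\<^sub>m a) = 1\<^sub>m b" and pq: "p < b" "q < b"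
  shows "(\<Sum>i<a. E (eunit a i i) $$ (p,q)) = (if p = q then 1 else 0)"
proof -
  have "(if p = q then 1 else 0) = E (1\<^sub>m a) $$ (p,q)" using u pq by simp
  also have "\<dots> = (\<Sum>i<a. \<Sum>j<a. (if i = j then E (eunit a i j) $$ (p,q) else 0))"
    unfolding lin_map_expand[OF E one_carrier_mat pq] by (intro sum.cong refl) simp
  also have "\<dots> = (\<Sum>i<a. E (eunit a i i) $$ (p,q))" by (simp add: sum.delta)
  finally show ?thesis by simp
qed

lemma amplify_one:
  assumes E: "lin_map a b E" "E (1\<^sub>m a) = 1\<^sub>m b"
  shows "amplify a b k E (1\<^sub>m (a*k)) = 1\<^sub>m (b*k)"
proof (rule eq_matI)
  fix P Q assume "P < dim_row (1\<^sub>m (b*k) :: complex mat)" "Q < dim_col (1\<^sub>m (b*k) :: complex mat)"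
  then have PQ: "P < b*k" "Q < b*k" by auto
  have k: "0 < k" using PQ by (cases k) auto
  have Pd: "P div k < b" "Q div k < b" using PQ by (auto simp: less_mult_imp_div_less)
  have mk: "P mod k < k" "Q mod k < k" using k by auto
  have "amplify a b k E (1\<^sub>m (a*k)) $$ (P,Q) =
      (\<Sum>i<a. \<Sum>j<a. (if i = j \<and> P mod k = Q mod k then 1 else 0) * E (eunit a i j) $$ (P div k, Q div k))"
    unfolding amplify_index[OF PQ] using mk by (simp add: mult_add_less mult_add_eq_iff)
  also have "\<dots> = (\<Sum>i<a. \<Sum>j<a. if P mod k = Q mod k then
      (if i = j then E (eunit a i j) $$ (P div k, Q div k) else 0) else 0)"
    by (intro sum.cong refl) simp
  also have "\<dots> = (if P mod k = Q mod k then (\<Sum>i<a. E (eunit a i i) $$ (P div k, Q div k)) else 0)"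
    by (cases "P mod k = Q mod k") (simp_all add: sum.delta)
  also have "\<dots> = (if P = Q then 1 else 0)"
    using lin_map_unital_diag_sum[OF E Pd] by (auto, metis div_mult_mod_eq)
  finally show "amplify a b k E (1\<^sub>m (a*k)) $$ (P,Q) = 1\<^sub>m (b*k) $$ (P,Q)" using PQ by simp
qed auto

lemma amplify_comp:
  assumes S: "lin_map b c S" and R: "\<And>X. X \<in> carrier_mat a a \<Longrightarrow> R X \<in> carrier_mat b b"
  shows "amplify b c k S (amplify a b k R A) = amplify a c k (\<lambda>X. S (R X)) A"
proof (rule eq_matI)
  fix P Q assume "P < dim_row (amplify a c k (\<lambda>X. S (R X)) A)" "Q < dim_col (amplify a c k (\<lambda>X. S (R X)) A)"
  then have PQ: "P < c*k" "Q < c*k" by auto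
  have k: "0 < k" using PQ by (cases k) auto
  have Pd: "P div k < c" "Q div k < c" using PQ by (auto simp: less_mult_imp_div_less)
  have "amplify b c k S (amplify a b k R A) $$ (P,Q)
     = (\<Sum>u<b. \<Sum>v<b. (\<Sum>i<a. \<Sum>j<a. A $$ (i*k + P mod k, j*k + Q mod k) * R (eunit a i j) $$ (u, v))
            * S (eunit b u v) $$ (P div k, Q div k))"
    unfolding amplify_index[OF PQ]
    by (intro sum.cong refl, subst amplify_index) (use k in \<open>auto simp: mult_add_less\<close>)
  also have "\<dots> = (\<Sum>i<a. \<Sum>j<a. A $$ (i*k + P mod k, j*k + Q mod k) *
          (\<Sum>u<b. \<Sum>v<b. R (eunit a i j) $$ (u, v) * S (eunit b u v) $$ (P div k, Q div k)))"
    by (simp add: sum_distrib_left sum_distrib_right mult.assoc sum.swap[of _ "{..<b}" "{..<a}"])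
  also have "\<dots> = amplify a c k (\<lambda>X. S (R X)) A $$ (P,Q)"
    unfolding amplify_index[OF PQ]
    by (intro sum.cong refl arg_cong2[where f="(*)"] lin_map_expand[symmetric, OF S] R eunit_carrier Pd)
  finally show "amplify b c k S (amplify a b k R A) $$ (P,Q) = amplify a c k (\<lambda>X. S (R X)) A $$ (P,Q)" .
qed auto

lemma amplify_id:
  assumes A: "A \<in> carrier_mat (a*k) (a*k)"
  shows "amplify a a k (\<lambda>X. X) A = A"
proof (rule eq_matI)
  fix P Q assume "P < dim_row A" "Q < dim_col A"
  then have PQ: "P < a*k" "Q < a*k" using A by auto
  have Pd: "P div k < a" "Q div k < a" using PQ by (auto simp: less_mult_imp_div_less)
  have "amplify a a k (\<lambda>X. X) A $$ (P,Q) =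
    (\<Sum>i<a. \<Sum>j<a. A $$ (i*k + P mod k, j*k + Q mod k) * (if P div k = i \<and> Q div k = j then 1 else 0))"
    unfolding amplify_index[OF PQ] by (intro sum.cong refl) (auto simp: index_eunit Pd)
  also have "\<dots> = A $$ (P,Q)" by (simp add: sum_sum_delta[OF Pd])
  finally show "amplify a a k (\<lambda>X. X) A $$ (P,Q) = A $$ (P,Q)" .
qed (use A in auto)

lemma lin_map_map_tensor: "lin_map (a1*a2) (b1*b2) (map_tensor a1 b1 a2 b2 S R)"
  unfolding lin_map_def
proof (intro conjI ballI allI)
  fix A B :: "complex mat"
  assume A: "A \<in> carrier_mat (a1*a2) (a1*a2)" and B: "B \<in> carrier_mat (a1*a2) (a1*a2)"
  show "map_tensor a1 b1 a2 b2 S R (A + B) = map_tensor a1 b1 a2 b2 S R A + map_tensor a1 b1 a2 b2 S R B"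
    using A B by (intro eq_matI) (auto simp: map_tensor_def mult_add_less sum.distrib[symmetric] distrib_right)
next
  fix A :: "complex mat" and c assume A: "A \<in> carrier_mat (a1*a2) (a1*a2)"
  show "map_tensor a1 b1 a2 b2 S R (c \<cdot>\<^sub>m A) = c \<cdot>\<^sub>m map_tensor a1 b1 a2 b2 S R A"
    using A by (intro eq_matI) (auto simp: map_tensor_def mult_add_less sum_distrib_left mult.assoc)
qed simp

lemma map_tensor_cong:
  assumes "\<And>X. X \<in> carrier_mat a1 a1 \<Longrightarrow> S X = S' X" "\<And>X. X \<in> carrier_mat a2 a2 \<Longrightarrow> R X = R' X"
  shows "map_tensor a1 b1 a2 b2 S R A = map_tensor a1 b1 a2 b2 S' R' A"
  unfolding map_tensor_def using assms by simp

lemma map_tensor_factor: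
  assumes X: "X \<in> carrier_mat (a1*a2) (a1*a2)"
  shows "map_tensor a1 b1 a2 b2 L R X = amplify a1 b1 b2 L (map_tensor a1 a1 a2 b2 (\<lambda>X. X) R X)"
proof (rule eq_matI)
  fix p q assume "p < dim_row (amplify a1 b1 b2 L (map_tensor a1 a1 a2 b2 (\<lambda>X. X) R X))"
    "q < dim_col (amplify a1 b1 b2 L (map_tensor a1 a1 a2 b2 (\<lambda>X. X) R X))"
  then have pq: "p < b1*b2" "q < b1*b2" by auto
  have b2: "0 < b2" using pq by (cases b2) auto
  have pm: "p mod b2 < b2" "q mod b2 < b2" using b2 by auto
  let ?Z = "map_tensor a1 a1 a2 b2 (\<lambda>X. X) R X"
  let ?r = "\<lambda>i j. \<Sum>k<a2. \<Sum>l<a2. X $$ (i*a2 + k, j*a2 + l) * R (eunit a2 k l) $$ (p mod b2, q mod b2)"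
  have Z_index: "?Z $$ (i*b2 + p mod b2, j*b2 + q mod b2) = ?r i j" if ij: "i < a1" "j < a1" for i j
  proof -
    have "?Z $$ (i*b2 + p mod b2, j*b2 + q mod b2) =
        (\<Sum>i2<a1. \<Sum>j2<a1. \<Sum>k<a2. \<Sum>l<a2. X $$ (i2*a2 + k, j2*a2 + l) *
          eunit a1 i2 j2 $$ (i, j) * R (eunit a2 k l) $$ (p mod b2, q mod b2))"
      unfolding map_tensor_def using ij pm by (simp add: mult_add_less)
    also have "\<dots> = (\<Sum>i2<a1. \<Sum>j2<a1. ?r i2 j2 * (if i = i2 \<and> j = j2 then 1 else 0))"
      using ij by (intro sum.cong refl) (auto simp: index_eunit sum_distrib_right)
    also have "\<dots> = ?r i j" by (rule sum_sum_delta[OF ij])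
    finally show ?thesis .
  qed
  have "amplify a1 b1 b2 L ?Z $$ (p,q) =
      (\<Sum>i<a1. \<Sum>j<a1. \<Sum>k<a2. \<Sum>l<a2. X $$ (i*a2 + k, j*a2 + l) * L (eunit a1 i j) $$ (p div b2, q div b2)
        * R (eunit a2 k l) $$ (p mod b2, q mod b2))"
    unfolding amplify_index[OF pq]
    by (intro sum.cong refl) (simp add: Z_index sum_distrib_left sum_distrib_right mult_ac)
  also have "\<dots> = map_tensor a1 b1 a2 b2 L R X $$ (p,q)"
    unfolding map_tensor_def using pq by simp
  finally show "map_tensor a1 b1 a2 b2 L R X $$ (p,q) = amplify a1 b1 b2 L ?Z $$ (p,q)" by simp
qed auto

lemma map_tensor_diff_left:
  assumes L: "\<And>X r s. X \<in> carrier_mat a1 a1 \<Longrightarrow> r < b1 \<Longrightarrow> s < b1 \<Longrightarrow>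
      L1 X $$ (r,s) = L2 X $$ (r,s) - L3 X $$ (r,s)"
    and pq: "p < b1*b2" "q < b1*b2"
  shows "map_tensor a1 b1 a2 b2 L1 R A $$ (p,q) =
    map_tensor a1 b1 a2 b2 L2 R A $$ (p,q) - map_tensor a1 b1 a2 b2 L3 R A $$ (p,q)"
proof -
  have pd: "p div b2 < b1" "q div b2 < b1" using pq by (auto simp: less_mult_imp_div_less mult.commute)
  show ?thesis unfolding map_tensor_def using pq
    by (simp add: L pd sum_subtractf[symmetric] algebra_simps)
qed

lemma map_tensor_diff_right:
  assumes R: "\<And>X r s. X \<in> carrier_mat a2 a2 \<Longrightarrow> r < b2 \<Longrightarrow> s < b2 \<Longrightarrow>
      R1 X $$ (r,s) = R2 X $$ (r,s) - R3 X $$ (r,s)"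
    and pq: "p < b1*b2" "q < b1*b2"
  shows "map_tensor a1 b1 a2 b2 L R1 A $$ (p,q) =
    map_tensor a1 b1 a2 b2 L R2 A $$ (p,q) - map_tensor a1 b1 a2 b2 L R3 A $$ (p,q)"
proof -
  have b2: "0 < b2" using pq by (cases b2) auto
  show ?thesis unfolding map_tensor_def using pq b2
    by (simp add: R sum_subtractf[symmetric] algebra_simps)
qed

lemma map_tensor_sum_right:
  assumes R: "\<And>X r s. X \<in> carrier_mat a2 a2 \<Longrightarrow> r < b2 \<Longrightarrow> s < b2 \<Longrightarrow>
      R X $$ (r,s) = (\<Sum>t\<in>I. Rs t X $$ (r,s))"
    and pq: "p < b1*b2" "q < b1*b2"
  shows "map_tensor a1 b1 a2 b2 L R A $$ (p,q) = (\<Sum>t\<in>I. map_tensor a1 b1 a2 b2 L (Rs t) A $$ (p,q))"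
proof -
  have b2: "0 < b2" using pq by (cases b2) auto
  have "map_tensor a1 b1 a2 b2 L R A $$ (p,q) = (\<Sum>i<a1. \<Sum>j<a1. \<Sum>k<a2. \<Sum>l<a2. \<Sum>t\<in>I.
       A $$ (i*a2 + k, j*a2 + l) * L (eunit a1 i j) $$ (p div b2, q div b2) * Rs t (eunit a2 k l) $$ (p mod b2, q mod b2))"
    unfolding map_tensor_def using pq b2 by (simp add: R sum_distrib_left)
  also have "\<dots> = (\<Sum>t\<in>I. map_tensor a1 b1 a2 b2 L (Rs t) A $$ (p,q))"
    unfolding map_tensor_def using pq by (simp add: sum.swap[of _ I])
  finally show ?thesis .
qed

lemma lin_map_tensor_list: "lin_map (d^length Ls) (d^length Ls) (tensor_list d Ls)"
proof (cases Ls)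
  case Nil
  then show ?thesis unfolding lin_map_def by simp
next
  case (Cons L Ls')
  then show ?thesis using lin_map_map_tensor[of d "d^length Ls'" d "d^length Ls'" L "tensor_list d Ls'"] by simp
qed

lemma tensor_list_carrier:
  "X \<in> carrier_mat (d^length Ls) (d^length Ls) \<Longrightarrow> tensor_list d Ls X \<in> carrier_mat (d^length Ls) (d^length Ls)"
  using lin_map_tensor_list[of d Ls] unfolding lin_map_def by blast

lemma tensor_list_update_diff:
  assumes L: "\<And>X r s. X \<in> carrier_mat d d \<Longrightarrow> r < d \<Longrightarrow> s < d \<Longrightarrow>
      L1 X $$ (r,s) = L2 X $$ (r,s) - L3 X $$ (r,s)"
  shows "i < length Ls \<Longrightarrow> p < d^length Ls \<Longrightarrow> q < d^length Ls \<Longrightarrow>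
    tensor_list d (Ls[i:=L1]) Y $$ (p,q) = tensor_list d (Ls[i:=L2]) Y $$ (p,q) - tensor_list d (Ls[i:=L3]) Y $$ (p,q)"
proof (induction Ls arbitrary: i Y p q)
  case Nil
  then show ?case by simp
next
  case (Cons L Ls)
  show ?case
  proof (cases i)
    case 0
    then show ?thesis using Cons.prems by (simp add: map_tensor_diff_left[OF L])
  next
    case (Suc i')
    then show ?thesis using Cons.prems
      by (simp, intro map_tensor_diff_right) (use Cons.IH[of i'] in simp_all)
  qed
qed

section \<open>Channels are complete contractions\<close>

lemma channel_id: "channel a a (\<lambda>X. X)"
  unfolding channel_def lin_map_def completely_positive_def psd_def by (auto simp: amplify_id)

text \<open>Viewing \<open>C\<^sup>c \<otimes> C\<^sup>2 \<otimes> C\<^sup>k\<close> as two copies of \<open>C\<^sup>c \<otimes> C\<^sup>k\<close>, index \<open>P\<close> of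
  copy \<open>s \<in> {0,1}\<close> is \<open>block_index k s P\<close>; matrices on it are \<open>2 \<times> 2\<close> block matrices.\<close>

definition block_index :: "nat \<Rightarrow> nat \<Rightarrow> nat \<Rightarrow> nat" where
  "block_index k s P = P div k * (2*k) + s*k + P mod k"

lemma block_index_eq: "s < 2 \<Longrightarrow> r < k \<Longrightarrow> block_index k s (p*k + r) = p*(2*k) + s*k + r"
  unfolding block_index_def by simp

lemma block_index_div_mod:
  assumes "s < 2" "P < c*k"
  shows "block_index k s P < c*(2*k)" "block_index k s P div (2*k) = P div k"
    "block_index k s P mod (2*k) = s*k + P mod k"
proof -
  have k: "0 < k" using assms by (cases k) auto
  have "s*k + P mod k < 1*k + k"
    using assms(1) k by (intro add_le_less_mono mult_le_mono1) auto
  then have r: "s*k + P mod k < 2*k" by simp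
  have eq: "block_index k s P = P div k * (2*k) + (s*k + P mod k)"
    unfolding block_index_def by simp
  show "block_index k s P div (2*k) = P div k" "block_index k s P mod (2*k) = s*k + P mod k"
    unfolding eq using r by simp_all
  have "P div k < c" using assms(2) by (simp add: less_mult_imp_div_less)
  then show "block_index k s P < c*(2*k)" unfolding eq using r by (rule mult_add_less)
qed

lemma block_index_decode:
  assumes "s < 2" "P < c*k"
  shows "block_index k s P mod (2*k) div k = s"
    "block_index k s P div (2*k) * k + block_index k s P mod (2*k) mod k = P"
proof -
  have k: "0 < k" using assms by (cases k) auto
  then show "block_index k s P mod (2*k) div k = s"
    "block_index k s P div (2*k) * k + block_index k s P mod (2*k) mod k = P"
    using block_index_div_mod[OF assms] by simp_all
qed

lemma sum_block_split:
  assumes k: "0 < k"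
  shows "(\<Sum>P<c*(2*k). g P) = (\<Sum>P<c*k. g (block_index k 0 P)) + (\<Sum>P<c*k. g (block_index k 1 P))"
proof -
  have "(\<Sum>P<c*(2*k). g P) = (\<Sum>p<c. (\<Sum>r<k. g (p*(2*k) + r)) + (\<Sum>r<k. g (p*(2*k) + (k + r))))"
    by (simp add: sum_lessThan_mult sum_lessThan_add mult_2)
  also have "\<dots> = (\<Sum>p<c. \<Sum>r<k. g (block_index k 0 (p*k + r))) + (\<Sum>p<c. \<Sum>r<k. g (block_index k 1 (p*k + r)))"
    by (simp add: sum.distrib block_index_eq add.assoc)
  also have "\<dots> = (\<Sum>P<c*k. g (block_index k 0 P)) + (\<Sum>P<c*k. g (block_index k 1 P))"
    by (simp add: sum_lessThan_mult)
  finally show ?thesis .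
qed

lemma qform_blocks:
  assumes k: "0 < k" and N: "N \<in> carrier_mat (c*(2*k)) (c*(2*k))" and v: "dim_vec v = c*(2*k)"
    and B: "\<And>s t P Q. s < 2 \<Longrightarrow> t < 2 \<Longrightarrow> P < c*k \<Longrightarrow> Q < c*k \<Longrightarrow>
      N $$ (block_index k s P, block_index k t Q) = B s t P Q"
    and x: "\<And>P. P < c*k \<Longrightarrow> v $ block_index k 0 P = x P"
    and y: "\<And>P. P < c*k \<Longrightarrow> v $ block_index k 1 P = y P"
  shows "(\<Sum>P<c*(2*k). cnj (v $ P) * (N *\<^sub>v v) $ P) =
     (\<Sum>P<c*k. \<Sum>Q<c*k. cnj (x P) * B 0 0 P Q * x Q) + (\<Sum>P<c*k. \<Sum>Q<c*k. cnj (x P) * B 0 1 P Q * y Q)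
   + (\<Sum>P<c*k. \<Sum>Q<c*k. cnj (y P) * B 1 0 P Q * x Q) + (\<Sum>P<c*k. \<Sum>Q<c*k. cnj (y P) * B 1 1 P Q * y Q)"
proof -
  let ?b = "block_index k"
  let ?w = "\<lambda>s. if s = 0 then x else y"
  have w: "v $ ?b s P = ?w s P" if "s < 2" "P < c*k" for s P
    using that x y by (auto simp: less_2_cases_iff)
  have "(\<Sum>P<c*(2*k). cnj (v $ P) * (N *\<^sub>v v) $ P) =
      (\<Sum>P<c*(2*k). \<Sum>Q<c*(2*k). cnj (v $ P) * N $$ (P,Q) * v $ Q)"
    using N v by (intro sum.cong refl) (simp add: mult_mat_vec_index sum_distrib_left mult.assoc)
  also have "\<dots> = (\<Sum>s<2. \<Sum>P<c*k. \<Sum>t<2. \<Sum>Q<c*k. cnj (v $ ?b s P) * N $$ (?b s P, ?b t Q) * v $ ?b t Q)"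
    by (simp only: sum_block_split[OF k]) (simp add: numeral_2_eq_2)
  also have "\<dots> = (\<Sum>s<2. \<Sum>t<2. \<Sum>P<c*k. \<Sum>Q<c*k. cnj (v $ ?b s P) * N $$ (?b s P, ?b t Q) * v $ ?b t Q)"
    by (rule sum.cong[OF refl]) (rule sum.swap)
  also have "\<dots> = (\<Sum>s<2. \<Sum>t<2. \<Sum>P<c*k. \<Sum>Q<c*k. cnj (?w s P) * B s t P Q * ?w t Q)"
    by (intro sum.cong refl) (simp add: w B)
  finally show ?thesis by (simp add: numeral_2_eq_2 add.assoc)
qed

lemma psd_qformD:
  assumes "psd n N" "dim_vec v = n"
  shows "Im (\<Sum>P<n. cnj (v $ P) * (N *\<^sub>v v) $ P) = 0" "Re (\<Sum>P<n. cnj (v $ P) * (N *\<^sub>v v) $ P) \<ge> 0"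
  using assms unfolding psd_def Let_def by auto

definition block_vec :: "nat \<Rightarrow> nat \<Rightarrow> (nat \<Rightarrow> complex) \<Rightarrow> (nat \<Rightarrow> complex) \<Rightarrow> complex vec" where
  "block_vec c k x y = vec (c*(2*k)) (\<lambda>P. if P mod (2*k) < k then x (P div (2*k) * k + P mod (2*k))
        else y (P div (2*k) * k + (P mod (2*k) - k)))"

lemma dim_block_vec [simp]: "dim_vec (block_vec c k x y) = c*(2*k)"
  unfolding block_vec_def by simp

lemma block_vec_index:
  assumes "P < c*k"
  shows "block_vec c k x y $ block_index k 0 P = x P" "block_vec c k x y $ block_index k 1 P = y P"
proof -
  have "0 < k" using assms by (cases k) auto
  then show "block_vec c k x y $ block_index k 0 P = x P" "block_vec c k x y $ block_index k 1 P = y P"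
    using block_index_div_mod[of 0 P c k] block_index_div_mod[of 1 P c k] assms
    by (simp_all add: block_vec_def)
qed

definition block_mat :: "nat \<Rightarrow> nat \<Rightarrow> (nat \<Rightarrow> nat \<Rightarrow> complex mat) \<Rightarrow> complex mat" where
  "block_mat c k Bs = mat (c*(2*k)) (c*(2*k)) (\<lambda>(P,Q). Bs (P mod (2*k) div k) (Q mod (2*k) div k)
      $$ (P div (2*k) * k + P mod (2*k) mod k, Q div (2*k) * k + Q mod (2*k) mod k))"

lemma block_mat_carrier [simp]: "block_mat c k Bs \<in> carrier_mat (c*(2*k)) (c*(2*k))"
  unfolding block_mat_def by simp

lemma block_mat_index:
  assumes "s < 2" "t < 2" "P < c*k" "Q < c*k"
  shows "block_mat c k Bs $$ (block_index k s P, block_index k t Q) = Bs s t $$ (P,Q)"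
  unfolding block_mat_def
  using block_index_div_mod(1)[OF assms(1,3)] block_index_div_mod(1)[OF assms(2,4)]
    block_index_decode[OF assms(1,3)] block_index_decode[OF assms(2,4)] by simp

text \<open>The blocks of \<open>[[1, A], [A\<^sup>*, 1]]\<close>, which is positive iff \<open>\<parallel>A\<parallel> \<le> 1\<close>.\<close>

definition dilation_block :: "complex mat \<Rightarrow> nat \<Rightarrow> nat \<Rightarrow> complex mat" where
  "dilation_block A s t = (if s = t then 1\<^sub>m (dim_row A) else if s = 0 then A
     else mat (dim_row A) (dim_row A) (\<lambda>(i,j). cnj (A $$ (j,i))))"

lemma qform_dilation:
  assumes k: "0 < k" and A: "A \<in> carrier_mat (a*k) (a*k)" and v: "dim_vec v = a*(2*k)"
    and x: "\<And>P. P < a*k \<Longrightarrow> v $ block_index k 0 P = x P"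
    and y: "\<And>P. P < a*k \<Longrightarrow> v $ block_index k 1 P = y P"
  shows "(\<Sum>P<a*(2*k). cnj (v $ P) * (block_mat a k (dilation_block A) *\<^sub>v v) $ P) =
    complex_of_real ((seq_norm (a*k) x)\<^sup>2 + (seq_norm (a*k) y)\<^sup>2
      + 2 * Re (seq_inner (a*k) x (\<lambda>P. \<Sum>Q<a*k. A $$ (P,Q) * y Q)))"
proof -
  let ?n = "a*k" and ?B = "\<lambda>s t P Q. dilation_block A s t $$ (P,Q)"
  define z where "z = seq_inner ?n x (\<lambda>P. \<Sum>Q<?n. A $$ (P,Q) * y Q)"
  have diag: "(\<Sum>P<?n. \<Sum>Q<?n. cnj (w P) * ?B s s P Q * w Q) = seq_inner ?n w w" for s w
  proof -
    have "(\<Sum>P<?n. \<Sum>Q<?n. cnj (w P) * ?B s s P Q * w Q) =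
        (\<Sum>P<?n. \<Sum>Q<?n. cnj (w P) * (if P = Q then 1 else 0) * w Q)"
      using A by (intro sum.cong refl) (simp add: dilation_block_def)
    then show ?thesis by (simp add: sum_sum_diag seq_inner_def)
  qed
  have "(\<Sum>P<a*(2*k). cnj (v $ P) * (block_mat a k (dilation_block A) *\<^sub>v v) $ P) =
     (\<Sum>P<?n. \<Sum>Q<?n. cnj (x P) * ?B 0 0 P Q * x Q) + (\<Sum>P<?n. \<Sum>Q<?n. cnj (x P) * ?B 0 1 P Q * y Q)
   + (\<Sum>P<?n. \<Sum>Q<?n. cnj (y P) * ?B 1 0 P Q * x Q) + (\<Sum>P<?n. \<Sum>Q<?n. cnj (y P) * ?B 1 1 P Q * y Q)"
    by (rule qform_blocks[OF k block_mat_carrier v block_mat_index x y])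
  also have "(\<Sum>P<?n. \<Sum>Q<?n. cnj (x P) * ?B 0 1 P Q * y Q) = z"
    unfolding dilation_block_def z_def seq_inner_def by (simp add: sum_distrib_left mult.assoc)
  also have "(\<Sum>P<?n. \<Sum>Q<?n. cnj (y P) * ?B 1 0 P Q * x Q) = cnj z"
  proof -
    have "(\<Sum>P<?n. \<Sum>Q<?n. cnj (y P) * ?B 1 0 P Q * x Q) = (\<Sum>Q<?n. \<Sum>P<?n. cnj (y P) * cnj (A $$ (Q,P)) * x Q)"
      using A by (subst sum.swap) (simp add: dilation_block_def)
    also have "\<dots> = cnj z"
      unfolding z_def seq_inner_def by (simp add: sum_distrib_left mult_ac)
    finally show ?thesis .
  qed
  finally show ?thesis unfolding diag z_def[symmetric] by (simp add: seq_inner_self complex_eq_iff)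
qed

lemma psd_dilation:
  assumes k: "0 < k" and A: "A \<in> carrier_mat (a*k) (a*k)" and nA: "opnorm A \<le> 1"
  shows "psd (a*(2*k)) (block_mat a k (dilation_block A))"
  unfolding psd_def Let_def
proof (intro conjI allI impI)
  show "block_mat a k (dilation_block A) \<in> carrier_mat (a*(2*k)) (a*(2*k))" by simp
  fix v :: "complex vec" assume v: "dim_vec v = a*(2*k)"
  let ?n = "a*k"
  define x where "x = (\<lambda>P. v $ block_index k 0 P)"
  define y where "y = (\<lambda>P. v $ block_index k 1 P)"
  define z where "z = seq_inner ?n x (\<lambda>P. \<Sum>Q<?n. A $$ (P,Q) * y Q)"
  have sumeq: "(\<Sum>P<a*(2*k). cnj (v $ P) * (block_mat a k (dilation_block A) *\<^sub>v v) $ P) =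
      complex_of_real ((seq_norm ?n x)\<^sup>2 + (seq_norm ?n y)\<^sup>2 + 2 * Re z)"
    unfolding z_def by (rule qform_dilation[OF k A v]) (simp_all add: x_def y_def)
  have "seq_norm ?n (\<lambda>P. \<Sum>Q<?n. A $$ (P,Q) * y Q) \<le> seq_norm ?n y"
    using seq_norm_mult_le[OF A, of y] nA by (simp add: mult_left_le_one_le order_trans)
  then have "cmod z \<le> seq_norm ?n x * seq_norm ?n y"
    unfolding z_def by (intro order.trans[OF seq_inner_le_norms] mult_left_mono) auto
  moreover have "\<bar>Re z\<bar> \<le> cmod z" by (rule abs_Re_le_cmod)
  moreover have "0 \<le> (seq_norm ?n x - seq_norm ?n y)\<^sup>2" by simp
  ultimately have "0 \<le> (seq_norm ?n x)\<^sup>2 + (seq_norm ?n y)\<^sup>2 + 2 * Re z"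
    by (simp add: power2_diff)
  then show "Im (\<Sum>i<a*(2*k). cnj (v $ i) * (block_mat a k (dilation_block A) *\<^sub>v v) $ i) = 0"
    "0 \<le> Re (\<Sum>i<a*(2*k). cnj (v $ i) * (block_mat a k (dilation_block A) *\<^sub>v v) $ i)"
    unfolding sumeq by simp_all
qed

lemma qform_unit_blocks:
  assumes k: "0 < k" and N: "N \<in> carrier_mat (b*(2*k)) (b*(2*k))"
    and diag: "\<And>s P Q. s < 2 \<Longrightarrow> P < b*k \<Longrightarrow> Q < b*k \<Longrightarrow>
      N $$ (block_index k s P, block_index k s Q) = (if P = Q then 1 else 0)"
    and off: "\<And>P Q. P < b*k \<Longrightarrow> Q < b*k \<Longrightarrow> N $$ (block_index k 0 P, block_index k 1 Q) = G $$ (P,Q)"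
  shows "(\<Sum>P<b*(2*k). cnj (block_vec b k x y $ P) * (N *\<^sub>v block_vec b k x y) $ P)
    = seq_inner (b*k) x x + seq_inner (b*k) x (\<lambda>P. \<Sum>Q<b*k. G $$ (P,Q) * y Q)
      + (\<Sum>P<b*k. \<Sum>Q<b*k. cnj (y P) * N $$ (block_index k 1 P, block_index k 0 Q) * x Q)
      + seq_inner (b*k) y y"
proof -
  let ?n = "b*k"
  define B where "B s t P Q = (if s = t then (if P = Q then 1 else 0) else if s = 0 then G $$ (P,Q)
      else N $$ (block_index k 1 P, block_index k 0 Q))" for s t P Q :: nat
  have "N $$ (block_index k s P, block_index k t Q) = B s t P Q"
    if "s < 2" "t < 2" "P < ?n" "Q < ?n" for s t P Q
    using that diag off unfolding B_def by (auto simp: less_2_cases_iff)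
  then have "(\<Sum>P<b*(2*k). cnj (block_vec b k x y $ P) * (N *\<^sub>v block_vec b k x y) $ P)
      = (\<Sum>P<?n. \<Sum>Q<?n. cnj (x P) * B 0 0 P Q * x Q) + (\<Sum>P<?n. \<Sum>Q<?n. cnj (x P) * B 0 1 P Q * y Q)
      + (\<Sum>P<?n. \<Sum>Q<?n. cnj (y P) * B 1 0 P Q * x Q) + (\<Sum>P<?n. \<Sum>Q<?n. cnj (y P) * B 1 1 P Q * y Q)"
    by (intro qform_blocks[OF k N dim_block_vec _ block_vec_index(1) block_vec_index(2)])
  also have "(\<Sum>P<?n. \<Sum>Q<?n. cnj (x P) * B 0 0 P Q * x Q) = seq_inner ?n x x"
    unfolding B_def seq_inner_def by (simp add: sum_sum_diag)
  also have "(\<Sum>P<?n. \<Sum>Q<?n. cnj (x P) * B 0 1 P Q * y Q) = seq_inner ?n x (\<lambda>P. \<Sum>Q<?n. G $$ (P,Q) * y Q)"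
    unfolding B_def seq_inner_def by (simp add: sum_distrib_left mult.assoc)
  also have "(\<Sum>P<?n. \<Sum>Q<?n. cnj (y P) * B 1 1 P Q * y Q) = seq_inner ?n y y"
    unfolding B_def seq_inner_def by (simp add: sum_sum_diag)
  finally show ?thesis unfolding B_def by simp
qed

lemma opnorm_le_1_if_psd_blocks:
  assumes k: "0 < k" and N: "psd (b*(2*k)) N" and G: "G \<in> carrier_mat (b*k) (b*k)"
    and diag: "\<And>s P Q. s < 2 \<Longrightarrow> P < b*k \<Longrightarrow> Q < b*k \<Longrightarrow>
      N $$ (block_index k s P, block_index k s Q) = (if P = Q then 1 else 0)"
    and off: "\<And>P Q. P < b*k \<Longrightarrow> Q < b*k \<Longrightarrow> N $$ (block_index k 0 P, block_index k 1 Q) = G $$ (P,Q)"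
  shows "opnorm G \<le> 1"
proof (rule opnorm_le_boundI[of 1])
  let ?n = "b*k"
  have Nc: "N \<in> carrier_mat (b*(2*k)) (b*(2*k))" using N unfolding psd_def by auto
  fix yv :: "complex vec" assume dy: "dim_vec yv = dim_col G"
  define y where "y = (\<lambda>i. yv $ i)"
  define x where "x = (\<lambda>P. \<Sum>Q<?n. G $$ (P,Q) * y Q)"
  define w where "w = (\<Sum>P<?n. \<Sum>Q<?n. cnj (y P) * N $$ (block_index k 1 P, block_index k 0 Q) * x Q)"
  let ?X = "complex_of_real ((seq_norm ?n x)\<^sup>2)" and ?Y = "complex_of_real ((seq_norm ?n y)\<^sup>2)"
  \<comment> \<open>Testing positivity at \<open>x \<oplus> l y\<close> for \<open>l = 1, \<i>, -1\<close>.\<close>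
  have form: "(\<Sum>P<b*(2*k). cnj (block_vec b k x (\<lambda>i. l * y i) $ P) * (N *\<^sub>v block_vec b k x (\<lambda>i. l * y i)) $ P)
     = ?X + l * ?X + cnj l * w + cnj l * l * ?Y" for l
  proof -
    have f1: "seq_inner ?n x (\<lambda>P. \<Sum>Q<?n. G $$ (P,Q) * (l * y Q)) = l * seq_inner ?n x x"
      unfolding seq_inner_def x_def by (simp add: sum_distrib_left mult_ac)
    have f2: "(\<Sum>P<?n. \<Sum>Q<?n. cnj (l * y P) * N $$ (block_index k 1 P, block_index k 0 Q) * x Q) = cnj l * w"
      unfolding w_def by (simp add: sum_distrib_left mult_ac)
    have f3: "seq_inner ?n (\<lambda>i. l * y i) (\<lambda>i. l * y i) = cnj l * l * seq_inner ?n y y"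
      unfolding seq_inner_def by (simp add: sum_distrib_left mult_ac)
    have "(\<Sum>P<b*(2*k). cnj (block_vec b k x (\<lambda>i. l * y i) $ P) * (N *\<^sub>v block_vec b k x (\<lambda>i. l * y i)) $ P)
      = seq_inner ?n x x + seq_inner ?n x (\<lambda>P. \<Sum>Q<?n. G $$ (P,Q) * (l * y Q))
        + (\<Sum>P<?n. \<Sum>Q<?n. cnj (l * y P) * N $$ (block_index k 1 P, block_index k 0 Q) * x Q)
        + seq_inner ?n (\<lambda>i. l * y i) (\<lambda>i. l * y i)"
      by (rule qform_unit_blocks[OF k Nc diag off])
    then show ?thesis unfolding f1 f2 f3 by (simp add: seq_inner_self)
  qed
  have "Im (?X + 1 * ?X + cnj 1 * w + cnj 1 * 1 * ?Y) = 0"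
    using psd_qformD(1)[OF N dim_block_vec[of b k x "\<lambda>i. 1 * y i"]] unfolding form .
  moreover have "Im (?X + \<i> * ?X + cnj \<i> * w + cnj \<i> * \<i> * ?Y) = 0"
    using psd_qformD(1)[OF N dim_block_vec[of b k x "\<lambda>i. \<i> * y i"]] unfolding form .
  moreover have "Re (?X + (-1) * ?X + cnj (-1) * w + cnj (-1) * (-1) * ?Y) \<ge> 0"
    using psd_qformD(2)[OF N dim_block_vec[of b k x "\<lambda>i. (-1) * y i"]] unfolding form .
  ultimately have "(seq_norm ?n x)\<^sup>2 \<le> (seq_norm ?n y)\<^sup>2" by simp
  then have "seq_norm ?n x \<le> seq_norm ?n y" by (rule power2_le_imp_le) simp
  moreover have "vnorm (G *\<^sub>v yv) = seq_norm ?n x"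
    unfolding vnorm_mult_mat_vec[OF dy] x_def y_def using G by simp
  moreover have "vnorm yv = seq_norm ?n y" unfolding vnorm_eq_seq_norm y_def using dy G by simp
  ultimately show "vnorm (G *\<^sub>v yv) \<le> 1 * vnorm yv" by simp
qed simp

lemma amplify_block_mat:
  assumes st: "s < 2" "t < 2" and PQ: "P < b*k" "Q < b*k"
  shows "amplify a b (2*k) E (block_mat a k Bs) $$ (block_index k s P, block_index k t Q)
    = amplify a b k E (Bs s t) $$ (P,Q)"
proof -
  have k: "0 < k" using PQ by (cases k) auto
  have "amplify a b (2*k) E (block_mat a k Bs) $$ (block_index k s P, block_index k t Q) =
      (\<Sum>i<a. \<Sum>j<a. block_mat a k Bs $$ (block_index k s (i*k + P mod k), block_index k t (j*k + Q mod k))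
        * E (eunit a i j) $$ (P div k, Q div k))"
    using block_index_div_mod[OF st(1) PQ(1)] block_index_div_mod[OF st(2) PQ(2)]
      block_index_eq[OF st(1)] block_index_eq[OF st(2)] k
    by (subst amplify_index) (simp_all add: add.assoc)
  also have "\<dots> = amplify a b k E (Bs s t) $$ (P,Q)"
    unfolding amplify_index[OF PQ] using k by (simp add: block_mat_index st mult_add_less)
  finally show ?thesis .
qed

text \<open>\<open>E \<otimes> id\<close> maps the positive matrix \<open>[[1, A], [A\<^sup>*, 1]]\<close> to the positive matrix
  \<open>[[1, (E \<otimes> id) A], [\<dots>, 1]]\<close>.\<close>

lemma opnorm_amplify_channel_le_1:
  assumes E: "channel a b E" and k: "0 < k" and A: "A \<in> carrier_mat (a*k) (a*k)" and nA: "opnorm A \<le> 1"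
  shows "opnorm (amplify a b k E A) \<le> 1"
proof -
  have Elin: "lin_map a b E" and cp: "completely_positive a b E" and u: "E (1\<^sub>m a) = 1\<^sub>m b"
    using E unfolding channel_def by auto
  let ?N = "amplify a b (2*k) E (block_mat a k (dilation_block A))"
  have "psd (b*(2*k)) ?N"
    using cp psd_dilation[OF k A nA] k unfolding completely_positive_def by auto
  then show ?thesis
  proof (rule opnorm_le_1_if_psd_blocks[OF k _ map_tensor_carrier])
    fix s P Q :: nat assume "s < 2" "P < b*k" "Q < b*k"
    then show "?N $$ (block_index k s P, block_index k s Q) = (if P = Q then 1 else 0)"
      using A by (simp add: amplify_block_mat dilation_block_def amplify_one[OF Elin u])
  next
    fix P Q :: nat assume "P < b*k" "Q < b*k"
    then show "?N $$ (block_index k 0 P, block_index k 1 Q) = amplify a b k E A $$ (P, Q)"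
      by (simp add: amplify_block_mat dilation_block_def)
  qed
qed

section \<open>Completely bounded maps\<close>

definition cb_bounded :: "nat \<Rightarrow> nat \<Rightarrow> (complex mat \<Rightarrow> complex mat) \<Rightarrow> real \<Rightarrow> bool" where
  "cb_bounded a b L c \<longleftrightarrow> (\<forall>k>0. \<forall>B \<in> carrier_mat (a*k) (a*k).
      opnorm (amplify a b k L B) \<le> c * opnorm B)"

lemma cb_boundedD:
  "cb_bounded a b L c \<Longrightarrow> 0 < k \<Longrightarrow> B \<in> carrier_mat (a*k) (a*k) \<Longrightarrow>
    opnorm (amplify a b k L B) \<le> c * opnorm B"
  unfolding cb_bounded_def by blast

lemma cb_bounded_id: "cb_bounded a a (\<lambda>X. X) 1"
  unfolding cb_bounded_def using amplify_id by simp

lemma cb_bounded_dim_0: "0 \<le> c \<Longrightarrow> cb_bounded 0 b L c"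
proof -
  assume c: "0 \<le> c"
  have "amplify 0 b k L B = 0\<^sub>m (b*k) (b*k)" for k B
    by (intro eq_matI) (simp_all add: map_tensor_def)
  then show ?thesis unfolding cb_bounded_def using c by simp
qed

lemma cb_bounded_cong:
  assumes "\<And>X. X \<in> carrier_mat a a \<Longrightarrow> L X = L' X" "cb_bounded a b L c"
  shows "cb_bounded a b L' c"
proof -
  have "amplify a b k L' B = amplify a b k L B" for k B
    by (rule map_tensor_cong) (simp_all add: assms(1))
  then show ?thesis using assms(2) unfolding cb_bounded_def by simp
qed

lemma cb_bounded_comp:
  assumes S: "lin_map b c S" "cb_bounded b c S c1" "0 \<le> c1"
    and R: "\<And>X. X \<in> carrier_mat a a \<Longrightarrow> R X \<in> carrier_mat b b" "cb_bounded a b R c2"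
  shows "cb_bounded a c (\<lambda>X. S (R X)) (c1 * c2)"
  unfolding cb_bounded_def
proof (intro allI impI ballI)
  fix k :: nat and B :: "complex mat" assume k: "0 < k" and B: "B \<in> carrier_mat (a*k) (a*k)"
  have "amplify a c k (\<lambda>X. S (R X)) B = amplify b c k S (amplify a b k R B)"
    by (rule amplify_comp[OF S(1) R(1), symmetric])
  then have "opnorm (amplify a c k (\<lambda>X. S (R X)) B) \<le> c1 * opnorm (amplify a b k R B)"
    using cb_boundedD[OF S(2) k map_tensor_carrier] by simp
  also have "\<dots> \<le> c1 * (c2 * opnorm B)"
    using cb_boundedD[OF R(2) k B] S(3) by (rule mult_left_mono)
  finally show "opnorm (amplify a c k (\<lambda>X. S (R X)) B) \<le> c1 * c2 * opnorm B"
    by (simp add: mult.assoc)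
qed

lemma cb_bounded_diff:
  assumes L: "\<And>X. X \<in> carrier_mat a a \<Longrightarrow> L X \<in> carrier_mat b b" "cb_bounded a b L c1"
    and L': "\<And>X. X \<in> carrier_mat a a \<Longrightarrow> L' X \<in> carrier_mat b b" "cb_bounded a b L' c2"
  shows "cb_bounded a b (\<lambda>X. L X - L' X) (c1 + c2)"
  unfolding cb_bounded_def
proof (intro allI impI ballI)
  fix k :: nat and B :: "complex mat" assume k: "0 < k" and B: "B \<in> carrier_mat (a*k) (a*k)"
  define G where "G i = (if i = (0::nat) then amplify a b k L B else amplify a b k L' B)" for i
  define w where "w i = (if i = (0::nat) then 1 else -1::complex)" for i
  have "opnorm (amplify a b k (\<lambda>X. L X - L' X) B) \<le> (\<Sum>i\<in>{0,1}. cmod (w i) * opnorm (G i))"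
  proof (rule opnorm_lincomb_le[OF map_tensor_carrier])
    fix x y assume xy: "x < b*k" "y < b*k"
    have "amplify a b k (\<lambda>X. L X - L' X) B $$ (x,y) = amplify a b k L B $$ (x,y) - amplify a b k L' B $$ (x,y)"
    proof (rule map_tensor_diff_left[OF _ xy])
      fix X :: "complex mat" and r s :: nat assume "X \<in> carrier_mat a a" "r < b" "s < b"
      then show "(L X - L' X) $$ (r,s) = L X $$ (r,s) - L' X $$ (r,s)"
        using L'(1)[OF \<open>X \<in> carrier_mat a a\<close>] by simp
    qed
    then show "amplify a b k (\<lambda>X. L X - L' X) B $$ (x,y) = (\<Sum>i\<in>{0,1}. w i * G i $$ (x,y))"
      by (simp add: G_def w_def)
  qed (auto simp: G_def)
  also have "\<dots> \<le> c1 * opnorm B + c2 * opnorm B"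
    using cb_boundedD[OF L(2) k B] cb_boundedD[OF L'(2) k B] by (simp add: G_def w_def)
  finally show "opnorm (amplify a b k (\<lambda>X. L X - L' X) B) \<le> (c1 + c2) * opnorm B"
    by (simp add: distrib_right)
qed

lemma amplify_tensor_id_eunit_index:
  assumes uv: "u < d*N" "v < d*N" and pq: "p < d*N" "q < d*N"
  shows "amplify d d N L (eunit (d*N) u v) $$ (p,q) =
    (\<Sum>i<d. \<Sum>j<d. L (eunit d i j) $$ (p div N, q div N)
      * (if i*N + p mod N = u \<and> j*N + q mod N = v then 1 else 0))"
proof -
  have N: "0 < N" using pq by (cases N) auto
  show ?thesis
    unfolding amplify_index[OF pq] using N uv
    by (intro sum.cong refl) (auto simp: index_eunit mult_add_less less_mult_imp_div_less)
qed

lemma amplify_amplify: "amplify (d*N) (d*N) k (amplify d d N L) B = amplify d d (N*k) L B"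
proof (rule eq_matI)
  fix x y assume "x < dim_row (amplify d d (N*k) L B)" "y < dim_col (amplify d d (N*k) L B)"
  then have xy: "x < d*N*k" "y < d*N*k" by (simp_all add: mult.assoc)
  let ?p = "x div k" and ?q = "y div k"
  have pq: "?p < d*N" "?q < d*N" using xy by (auto simp: less_mult_imp_div_less)
  have "0 < N" using pq by (cases N) auto
  then have pmN: "?p mod N < N" "?q mod N < N" by auto
  have "amplify (d*N) (d*N) k (amplify d d N L) B $$ (x,y) =
      (\<Sum>u<d*N. \<Sum>v<d*N. \<Sum>i<d. \<Sum>j<d. B $$ (u*k + x mod k, v*k + y mod k)
        * L (eunit d i j) $$ (?p div N, ?q div N) * (if i*N + ?p mod N = u \<and> j*N + ?q mod N = v then 1 else 0))"
    unfolding amplify_index[OF xy]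
    by (intro sum.cong refl) (simp add: amplify_tensor_id_eunit_index pq sum_distrib_left mult.assoc)
  also have "\<dots> = (\<Sum>i<d. \<Sum>j<d. \<Sum>u<d*N. \<Sum>v<d*N. B $$ (u*k + x mod k, v*k + y mod k)
        * L (eunit d i j) $$ (?p div N, ?q div N) * (if i*N + ?p mod N = u \<and> j*N + ?q mod N = v then 1 else 0))"
    by (rule sum_swap_nested)
  also have "\<dots> = (\<Sum>i<d. \<Sum>j<d. B $$ ((i*N + ?p mod N)*k + x mod k, (j*N + ?q mod N)*k + y mod k) *
      L (eunit d i j) $$ (?p div N, ?q div N))"
    by (intro sum.cong refl sum_sum_delta) (auto simp: mult_add_less pmN)
  also have "\<dots> = amplify d d (N*k) L B $$ (x,y)"
  proof -
    have e1: "x mod (N*k) = k * (x div k mod N) + x mod k" "y mod (N*k) = k * (y div k mod N) + y mod k"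
      using mod_mult2_eq[of x k N] mod_mult2_eq[of y k N] by (simp_all add: mult.commute)
    have e2: "x div (N*k) = x div k div N" "y div (N*k) = y div k div N"
      using div_mult2_eq[of x k N] div_mult2_eq[of y k N] by (simp_all add: mult.commute)
    have e3: "\<And>i a r. (i*N + a)*k + r = i*(N*k) + (k*a + r)" by (simp add: algebra_simps)
    show ?thesis
      unfolding amplify_index[OF xy[unfolded mult.assoc]] by (simp only: e1 e2 e3)
  qed
  finally show "amplify (d*N) (d*N) k (amplify d d N L) B $$ (x,y) = amplify d d (N*k) L B $$ (x,y)" .
qed (simp_all add: mult.assoc)

lemma cb_bounded_tensor_id:
  assumes L: "cb_bounded d d L c" and N: "0 < N"
  shows "cb_bounded (d*N) (d*N) (amplify d d N L) c"
  unfolding cb_bounded_def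
proof (intro allI impI ballI)
  fix k :: nat and B :: "complex mat" assume k: "0 < k" and B: "B \<in> carrier_mat (d*N*k) (d*N*k)"
  then show "opnorm (amplify (d*N) (d*N) k (amplify d d N L) B) \<le> c * opnorm B"
    unfolding amplify_amplify using N by (intro cb_boundedD[OF L]) (simp_all add: mult.assoc)
qed

text \<open>Exchange of the first two factors of \<open>C\<^sup>p \<otimes> C\<^sup>q \<otimes> C\<^sup>k\<close> on row indices.\<close>

definition swap_index :: "nat \<Rightarrow> nat \<Rightarrow> nat \<Rightarrow> nat \<Rightarrow> nat" where
  "swap_index p q k z = (z div k mod q * p + z div k div q) * k + z mod k"

lemma swap_index_eq: "j < q \<Longrightarrow> r < k \<Longrightarrow> swap_index p q k ((i*q + j)*k + r) = (j*p + i)*k + r"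
  unfolding swap_index_def by simp

lemma swap_index_less:
  assumes "z < p*q*k"
  shows "swap_index p q k z < q*p*k"
proof -
  have k: "0 < k" and q: "0 < q" using assms by (cases k; cases q; auto)+
  have "z div k < p*q" using assms by (simp add: less_mult_imp_div_less)
  then have "z div k div q < p" by (simp add: less_mult_imp_div_less)
  then have "z div k mod q * p + z div k div q < q*p" using q by (intro mult_add_less) auto
  then show ?thesis unfolding swap_index_def using k by (simp add: mult_add_less)
qed

lemma swap_index_swap_index:
  assumes "z < p*q*k"
  shows "swap_index q p k (swap_index p q k z) = z"
proof -
  have k: "0 < k" using assms by (cases k) auto
  have "z div k div q < p" using assms by (simp add: less_mult_imp_div_less mult.commute)
  then have "swap_index q p k (swap_index p q k z) = (z div k div q * q + z div k mod q) * k + z mod k"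
    unfolding swap_index_def[of p q] using k by (subst swap_index_eq) auto
  also have "\<dots> = z" by simp
  finally show ?thesis .
qed

lemma swap_index_div_mod:
  assumes "x < d*N*k"
  shows "swap_index d N k x div (d*k) = x div k mod N"
    "swap_index d N k x mod (d*k) = x div k div N * k + x mod k"
    "x div k div N * k + x mod k < d*k"
proof -
  have k: "0 < k" using assms by (cases k) auto
  have "x div k div N < d" using assms by (simp add: less_mult_imp_div_less mult.commute)
  then show w: "x div k div N * k + x mod k < d*k" using k by (intro mult_add_less) auto
  have dm: "(i*m + r) div m = i" "(i*m + r) mod m = r" if "r < m" for i r m :: nat
    using that by auto
  have "swap_index d N k x = x div k mod N * (d*k) + (x div k div N * k + x mod k)"
    unfolding swap_index_def by (simp add: algebra_simps)
  then show "swap_index d N k x div (d*k) = x div k mod N"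
    "swap_index d N k x mod (d*k) = x div k div N * k + x mod k"
    using dm[OF w] by simp_all
qed

lemma map_tensor_id_eunit_index:
  assumes uv: "u < d*N" "v < d*N" and pq: "p < d*N" "q < d*N"
  shows "map_tensor d d N N (\<lambda>X. X) R (eunit (d*N) u v) $$ (p,q) =
    (\<Sum>i<N. \<Sum>j<N. R (eunit N i j) $$ (p mod N, q mod N)
      * (if p div N * N + i = u \<and> q div N * N + j = v then 1 else 0))"
proof -
  have N: "0 < N" using pq by (cases N) auto
  have pd: "p div N < d" "q div N < d" using pq by (auto simp: less_mult_imp_div_less)
  let ?g = "\<lambda>i' j'. \<Sum>i<N. \<Sum>j<N. eunit (d*N) u v $$ (i'*N + i, j'*N + j) * R (eunit N i j) $$ (p mod N, q mod N)"
  have "map_tensor d d N N (\<lambda>X. X) R (eunit (d*N) u v) $$ (p,q) =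
    (\<Sum>i'<d. \<Sum>j'<d. ?g i' j' * (if p div N = i' \<and> q div N = j' then 1 else 0))"
    unfolding map_tensor_def using pq pd
    by (auto simp: index_eunit sum_distrib_right intro!: sum.cong)
  also have "\<dots> = ?g (p div N) (q div N)" by (rule sum_sum_delta[OF pd])
  also have "\<dots> = (\<Sum>i<N. \<Sum>j<N. R (eunit N i j) $$ (p mod N, q mod N)
      * (if p div N * N + i = u \<and> q div N * N + j = v then 1 else 0))"
    using pd by (intro sum.cong refl) (auto simp: index_eunit mult_add_less)
  finally show ?thesis .
qed

lemma amplify_id_tensor_index:
  assumes xy: "x < d*N*k" "y < d*N*k"
  shows "amplify (d*N) (d*N) k (map_tensor d d N N (\<lambda>X. X) R) B $$ (x,y) =
    amplify N N (d*k) R (mat (N*(d*k)) (N*(d*k)) (\<lambda>(u,v). B $$ (swap_index N d k u, swap_index N d k v)))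
      $$ (swap_index d N k x, swap_index d N k y)"
proof -
  let ?ph = "swap_index N d k" and ?ps = "swap_index d N k"
  let ?p = "x div k" and ?q = "y div k"
  have k: "0 < k" using xy by (cases k) auto
  have pq: "?p < d*N" "?q < d*N" using xy by (auto simp: less_mult_imp_div_less)
  have pdN: "?p div N < d" "?q div N < d" using pq by (auto simp: less_mult_imp_div_less)
  have "amplify (d*N) (d*N) k (map_tensor d d N N (\<lambda>X. X) R) B $$ (x,y) =
      (\<Sum>u<d*N. \<Sum>v<d*N. \<Sum>i<N. \<Sum>j<N. B $$ (u*k + x mod k, v*k + y mod k) *
        R (eunit N i j) $$ (?p mod N, ?q mod N) * (if ?p div N * N + i = u \<and> ?q div N * N + j = v then 1 else 0))"
    unfolding amplify_index[OF xy]
    by (intro sum.cong refl) (simp add: map_tensor_id_eunit_index pq sum_distrib_left mult.assoc)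
  also have "\<dots> = (\<Sum>i<N. \<Sum>j<N. \<Sum>u<d*N. \<Sum>v<d*N. B $$ (u*k + x mod k, v*k + y mod k) *
        R (eunit N i j) $$ (?p mod N, ?q mod N) * (if ?p div N * N + i = u \<and> ?q div N * N + j = v then 1 else 0))"
    by (rule sum_swap_nested)
  also have "\<dots> = (\<Sum>i<N. \<Sum>j<N. B $$ ((?p div N * N + i)*k + x mod k, (?q div N * N + j)*k + y mod k) *
      R (eunit N i j) $$ (?p mod N, ?q mod N))"
    by (intro sum.cong refl sum_sum_delta) (auto simp: mult_add_less pdN)
  also have "\<dots> = (\<Sum>i<N. \<Sum>j<N. B $$ (?ph (i*(d*k) + ?ps x mod (d*k)), ?ph (j*(d*k) + ?ps y mod (d*k)))
      * R (eunit N i j) $$ (?ps x div (d*k), ?ps y div (d*k)))"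
  proof (intro sum.cong refl)
    fix i j assume "i \<in> {..<N}" "j \<in> {..<N}"
    have "?ph (i*(d*k) + (?p div N * k + x mod k)) = (?p div N * N + i)*k + x mod k"
      "?ph (j*(d*k) + (?q div N * k + y mod k)) = (?q div N * N + j)*k + y mod k"
      using swap_index_eq[of "?p div N" d "x mod k" k N i] swap_index_eq[of "?q div N" d "y mod k" k N j]
        pdN k by (simp_all add: algebra_simps)
    then show "B $$ ((?p div N * N + i)*k + x mod k, (?q div N * N + j)*k + y mod k) *
        R (eunit N i j) $$ (?p mod N, ?q mod N) =
      B $$ (?ph (i*(d*k) + ?ps x mod (d*k)), ?ph (j*(d*k) + ?ps y mod (d*k)))
        * R (eunit N i j) $$ (?ps x div (d*k), ?ps y div (d*k))"
      by (simp add: swap_index_div_mod xy)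
  qed
  also have "\<dots> = amplify N N (d*k) R (mat (N*(d*k)) (N*(d*k)) (\<lambda>(u,v). B $$ (?ph u, ?ph v))) $$ (?ps x, ?ps y)"
  proof -
    have dk: "0 < d*k" using xy by (cases "d*k") auto
    have "\<And>i z. i < N \<Longrightarrow> i*(d*k) + z mod (d*k) < N*(d*k)" using dk by (simp add: mult_add_less)
    then show ?thesis
      using swap_index_less[OF xy(1)] swap_index_less[OF xy(2)] k
      by (subst amplify_index) (auto simp: mult.assoc intro!: sum.cong)
  qed
  finally show ?thesis .
qed

text \<open>\<open>(id \<otimes> R) \<otimes> id\<^sub>k\<close> is \<open>R \<otimes> id\<^sub>d\<^sub>k\<close> up to a permutation of rows and columns.\<close>

lemma cb_bounded_id_tensor:
  assumes R: "cb_bounded N N R c" "0 \<le> c" and d: "0 < d"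
  shows "cb_bounded (d*N) (d*N) (map_tensor d d N N (\<lambda>X. X) R) c"
  unfolding cb_bounded_def
proof (intro allI impI ballI)
  fix k :: nat and B :: "complex mat" assume k: "0 < k" and B: "B \<in> carrier_mat (d*N*k) (d*N*k)"
  let ?ph = "swap_index N d k" and ?ps = "swap_index d N k"
  define B' where "B' = mat (N*(d*k)) (N*(d*k)) (\<lambda>(u,v). B $$ (?ph u, ?ph v))"
  have B': "B' \<in> carrier_mat (N*(d*k)) (N*(d*k))" unfolding B'_def by simp
  have ph: "inj_on ?ph {..<N*(d*k)}" "?ph ` {..<N*(d*k)} \<subseteq> {..<d*N*k}"
    using swap_index_less[of _ N d k] swap_index_swap_index[of _ N d k]
    by (auto simp: mult.assoc intro: inj_on_inverseI)
  have ps: "inj_on ?ps {..<d*N*k}" "?ps ` {..<d*N*k} \<subseteq> {..<N*(d*k)}"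
    using swap_index_less[of _ d N k] swap_index_swap_index[of _ d N k]
    by (auto simp: mult.assoc intro: inj_on_inverseI)
  have "opnorm (amplify (d*N) (d*N) k (map_tensor d d N N (\<lambda>X. X) R) B) \<le> opnorm (amplify N N (d*k) R B')"
    by (rule opnorm_submatrix_le[OF map_tensor_carrier map_tensor_carrier ps ps])
      (simp add: amplify_id_tensor_index B'_def)
  also have "\<dots> \<le> c * opnorm B'" using d k by (intro cb_boundedD[OF R(1) _ B']) simp
  also have "\<dots> \<le> c * opnorm B"
    using opnorm_submatrix_le[OF B' B ph ph] R(2) by (intro mult_left_mono) (auto simp: B'_def)
  finally show "opnorm (amplify (d*N) (d*N) k (map_tensor d d N N (\<lambda>X. X) R) B) \<le> c * opnorm B" .
qed

lemma cb_bounded_tensor_list: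
  assumes Ps: "\<And>L c. (L, c) \<in> set Ps \<Longrightarrow> cb_bounded d d L c \<and> 0 \<le> c"
  shows "cb_bounded (d^length Ps) (d^length Ps) (tensor_list d (map fst Ps)) (prod_list (map snd Ps))"
  using Ps
proof (induction Ps)
  case Nil
  then show ?case using cb_bounded_id[of 1] by simp
next
  case (Cons P Ps)
  obtain L c where P: "P = (L, c)" by fastforce
  let ?N = "d^length Ps" and ?R = "tensor_list d (map fst Ps)" and ?c = "prod_list (map snd Ps)"
  have L: "cb_bounded d d L c" "0 \<le> c" using Cons.prems P by auto
  have R: "cb_bounded ?N ?N ?R ?c" using Cons by auto
  have c: "0 \<le> ?c" using Cons.prems by (intro prod_list_nonneg) fastforce
  show ?case
  proof (cases "d = 0")
    case True
    then show ?thesis using c L(2) P by (simp add: cb_bounded_dim_0)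
  next
    case False
    then have d: "0 < d" by simp
    have "cb_bounded (d*?N) (d*?N) (map_tensor d d ?N ?N (\<lambda>X. X) ?R) ?c"
      using d c by (intro cb_bounded_id_tensor R)
    then have "cb_bounded (d*?N) (d*?N) (\<lambda>X. amplify d d ?N L (map_tensor d d ?N ?N (\<lambda>X. X) ?R X)) (c * ?c)"
      using d L by (intro cb_bounded_comp[OF lin_map_map_tensor cb_bounded_tensor_id]) auto
    then have "cb_bounded (d*?N) (d*?N) (map_tensor d d ?N ?N L ?R) (c * ?c)"
      by (rule cb_bounded_cong[rotated]) (rule map_tensor_factor[symmetric])
    then show ?thesis using P by simp
  qed
qed

definition cb_norm_values :: "nat \<Rightarrow> nat \<Rightarrow> (complex mat \<Rightarrow> complex mat) \<Rightarrow> real set" where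
  "cb_norm_values a b S = {opnorm (amplify a b k S A) | k A.
      k > 0 \<and> A \<in> carrier_mat (a*k) (a*k) \<and> opnorm A \<le> 1}"

lemma cb_norm_eq_Sup: "cb_norm a b S = Sup (cb_norm_values a b S)"
  unfolding cb_norm_def cb_norm_values_def ..

lemma amplify_zero_in_cb_norm_values: "opnorm (amplify a b 1 S (0\<^sub>m a a)) \<in> cb_norm_values a b S"
  unfolding cb_norm_values_def by force

lemma cb_norm_leI:
  assumes "\<And>k A. 0 < k \<Longrightarrow> A \<in> carrier_mat (a*k) (a*k) \<Longrightarrow> opnorm A \<le> 1 \<Longrightarrow>
     opnorm (amplify a b k S A) \<le> K"
  shows "cb_norm a b S \<le> K"
proof -
  have "cb_norm_values a b S \<noteq> {}" using amplify_zero_in_cb_norm_values by blast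
  then show ?thesis
    unfolding cb_norm_eq_Sup by (rule cSup_least) (auto simp: cb_norm_values_def assms)
qed

lemma cb_boundedI:
  assumes c: "0 \<le> c"
    and bound: "\<And>k A. 0 < k \<Longrightarrow> A \<in> carrier_mat (a*k) (a*k) \<Longrightarrow> opnorm A \<le> 1 \<Longrightarrow>
      opnorm (amplify a b k S A) \<le> c"
  shows "cb_bounded a b S c"
  unfolding cb_bounded_def
proof (intro allI impI ballI)
  fix k :: nat and B :: "complex mat" assume k: "0 < k" and B: "B \<in> carrier_mat (a*k) (a*k)"
  let ?t = "opnorm B"
  show "opnorm (amplify a b k S B) \<le> c * ?t"
  proof (rule field_le_epsilon)
    fix e :: real assume e: "0 < e"
    define s where "s = ?t + e / (c + 1)"
    have s: "0 < s" unfolding s_def using e c by (simp add: add_nonneg_pos)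
    define B' where "B' = (1 / s) \<cdot>\<^sub>m B"
    have B': "B' \<in> carrier_mat (a*k) (a*k)" unfolding B'_def using B by simp
    have "opnorm B' \<le> cmod (1 / s) * ?t" unfolding B'_def by (rule opnorm_smult_le[OF B])
    also have "\<dots> = ?t / s" using s by (simp add: norm_divide)
    also have "\<dots> \<le> 1" using s e c unfolding s_def by (simp add: divide_le_eq add_nonneg_pos)
    finally have nB': "opnorm B' \<le> 1" .
    have "B = complex_of_real s \<cdot>\<^sub>m B'" unfolding B'_def using s B by (intro eq_matI) auto
    then have "amplify a b k S B = complex_of_real s \<cdot>\<^sub>m amplify a b k S B'"
      using lin_map_map_tensor[of a k b k S "\<lambda>X. X"] B' unfolding lin_map_def by simp
    then have "opnorm (amplify a b k S B) \<le> s * opnorm (amplify a b k S B')"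
      using opnorm_smult_le[OF map_tensor_carrier, of "complex_of_real s"] s by simp
    also have "\<dots> \<le> s * c" using bound[OF k B' nB'] s by (simp add: mult_left_mono)
    also have "\<dots> = ?t * c + e * (c / (c + 1))" unfolding s_def using c by (simp add: field_simps)
    also have "\<dots> \<le> ?t * c + e * 1" using c e by (intro add_left_mono mult_left_mono) auto
    finally show "opnorm (amplify a b k S B) \<le> c * ?t + e" by (simp add: mult.commute)
  qed
qed

lemma cb_bounded_cb_norm:
  assumes S: "cb_bounded a b S c" and c: "0 \<le> c"
  shows "cb_bounded a b S (cb_norm a b S)" "0 \<le> cb_norm a b S"
proof -
  have unit: "opnorm (amplify a b k S A) \<le> c" if "0 < k" "A \<in> carrier_mat (a*k) (a*k)" "opnorm A \<le> 1" for k A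
  proof -
    have "c * opnorm A \<le> c" using that(3) c by (simp add: mult_left_le)
    then show ?thesis using cb_boundedD[OF S that(1,2)] by linarith
  qed
  have bdd: "bdd_above (cb_norm_values a b S)"
    by (rule bdd_aboveI[of _ c]) (auto simp: cb_norm_values_def unit)
  have up: "opnorm (amplify a b k S A) \<le> cb_norm a b S"
    if "0 < k" "A \<in> carrier_mat (a*k) (a*k)" "opnorm A \<le> 1" for k A
    unfolding cb_norm_eq_Sup by (rule cSup_upper[OF _ bdd]) (use that in \<open>auto simp: cb_norm_values_def\<close>)
  have "opnorm (amplify a b 1 S (0\<^sub>m a a)) \<le> cb_norm a b S" by (rule up) simp_all
  then show c0: "0 \<le> cb_norm a b S" using opnorm_nonneg order_trans by blast
  show "cb_bounded a b S (cb_norm a b S)" by (rule cb_boundedI[OF c0 up])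
qed

lemma cb_bounded_channel: "channel a b E \<Longrightarrow> cb_bounded a b E 1"
  by (rule cb_boundedI) (simp_all add: opnorm_amplify_channel_le_1)

lemma cb_bounded_channel_minus_id:
  assumes T: "channel d d T"
  shows "cb_bounded d d (\<lambda>X. T X - X) (cb_norm d d (\<lambda>X. T X - X))" "0 \<le> cb_norm d d (\<lambda>X. T X - X)"
proof -
  have Tc: "\<And>X. X \<in> carrier_mat d d \<Longrightarrow> T X \<in> carrier_mat d d"
    using T unfolding channel_def lin_map_def by simp
  have "cb_bounded d d (\<lambda>X. T X - X) (1 + 1)"
    by (rule cb_bounded_diff[OF Tc cb_bounded_channel[OF T] _ cb_bounded_id]) simp
  then show "cb_bounded d d (\<lambda>X. T X - X) (cb_norm d d (\<lambda>X. T X - X))" "0 \<le> cb_norm d d (\<lambda>X. T X - X)"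
    using cb_bounded_cb_norm by simp_all
qed

lemma cb_norm_le_sum:
  assumes I: "finite I"
    and Ls: "\<And>s. s \<in> I \<Longrightarrow> cb_bounded a b (Ls s) (c s)" "\<And>s. s \<in> I \<Longrightarrow> 0 \<le> c s"
    and eq: "\<And>X p q. X \<in> carrier_mat a a \<Longrightarrow> p < b \<Longrightarrow> q < b \<Longrightarrow> S X $$ (p,q) = (\<Sum>s\<in>I. Ls s X $$ (p,q))"
  shows "cb_norm a b S \<le> (\<Sum>s\<in>I. c s)"
proof (rule cb_norm_leI)
  fix k :: nat and A :: "complex mat"
  assume k: "0 < k" and A: "A \<in> carrier_mat (a*k) (a*k)" and nA: "opnorm A \<le> 1"
  have "opnorm (amplify a b k S A) \<le> (\<Sum>s\<in>I. cmod 1 * opnorm (amplify a b k (Ls s) A))"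
  proof (rule opnorm_lincomb_le[OF map_tensor_carrier I map_tensor_carrier])
    fix x y assume xy: "x < b*k" "y < b*k"
    then have "x div k < b" "y div k < b" by (auto simp: less_mult_imp_div_less)
    then have "amplify a b k S A $$ (x,y) = (\<Sum>i<a. \<Sum>j<a. \<Sum>s\<in>I.
        A $$ (i*k + x mod k, j*k + y mod k) * Ls s (eunit a i j) $$ (x div k, y div k))"
      unfolding amplify_index[OF xy] by (simp add: eq sum_distrib_left)
    also have "\<dots> = (\<Sum>s\<in>I. \<Sum>i<a. \<Sum>j<a.
        A $$ (i*k + x mod k, j*k + y mod k) * Ls s (eunit a i j) $$ (x div k, y div k))"
      by (rule sum_swap_3)
    also have "\<dots> = (\<Sum>s\<in>I. 1 * amplify a b k (Ls s) A $$ (x,y))"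
      unfolding amplify_index[OF xy] by simp
    finally show "amplify a b k S A $$ (x,y) = (\<Sum>s\<in>I. 1 * amplify a b k (Ls s) A $$ (x,y))" .
  qed
  also have "\<dots> \<le> (\<Sum>s\<in>I. c s)"
  proof (rule sum_mono)
    fix s assume s: "s \<in> I"
    have "opnorm (amplify a b k (Ls s) A) \<le> c s * opnorm A" by (rule cb_boundedD[OF Ls(1)[OF s] k A])
    also have "\<dots> \<le> c s" using nA Ls(2)[OF s] by (simp add: mult_left_le)
    finally show "cmod 1 * opnorm (amplify a b k (Ls s) A) \<le> c s" by simp
  qed
  finally show "opnorm (amplify a b k S A) \<le> (\<Sum>s\<in>I. c s)" .
qed

section \<open>Error expansion of the tensor power\<close>

fun bool_lists :: "nat \<Rightarrow> bool list set" where
  "bool_lists 0 = {[]}"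
| "bool_lists (Suc n) = Cons True ` bool_lists n \<union> Cons False ` bool_lists n"

lemma finite_bool_lists [simp]: "finite (bool_lists n)"
  by (induction n) auto

lemma length_bool_lists: "bs \<in> bool_lists n \<Longrightarrow> length bs = n"
  by (induction n arbitrary: bs) auto

lemma bool_lists_memI: "length bs = n \<Longrightarrow> bs \<in> bool_lists n"
proof (induction n arbitrary: bs)
  case (Suc n)
  then obtain b bs' where "bs = b # bs'" "length bs' = n" by (cases bs) auto
  then show ?case using Suc.IH by (cases b) auto
qed simp

text \<open>\<open>T = (T - id) + id\<close> in every factor; \<open>True\<close> selects \<open>T - id\<close>.\<close>

definition split_factor :: "(complex mat \<Rightarrow> complex mat) \<Rightarrow> bool \<Rightarrow> complex mat \<Rightarrow> complex mat" where
  "split_factor T b = (if b then (\<lambda>X. T X - X) else (\<lambda>X. X))"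

lemma tensor_pow_expand:
  assumes T: "\<And>X. X \<in> carrier_mat d d \<Longrightarrow> T X \<in> carrier_mat d d"
  shows "p < d^n \<Longrightarrow> q < d^n \<Longrightarrow>
    tensor_list d (replicate n T) Y $$ (p,q) = (\<Sum>bs\<in>bool_lists n. tensor_list d (map (split_factor T) bs) Y $$ (p,q))"
proof (induction n arbitrary: Y p q)
  case 0
  then show ?case by simp
next
  case (Suc n)
  let ?N = "d^n" and ?g = "\<lambda>bs. tensor_list d (map (split_factor T) bs) Y $$ (p,q)"
  have pq: "p < d*?N" "q < d*?N" using Suc.prems by auto
  have Tdiff: "\<And>X r s. X \<in> carrier_mat d d \<Longrightarrow> r < d \<Longrightarrow> s < d \<Longrightarrow>
      (\<lambda>X. T X - X) X $$ (r,s) = T X $$ (r,s) - (\<lambda>X. X) X $$ (r,s)"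
    using T by auto
  have "tensor_list d (replicate (Suc n) T) Y $$ (p,q) =
      (\<Sum>bs\<in>bool_lists n. map_tensor d d ?N ?N T (tensor_list d (map (split_factor T) bs)) Y $$ (p,q))"
    using map_tensor_sum_right[OF Suc.IH pq] by simp
  also have "\<dots> = (\<Sum>bs\<in>bool_lists n. ?g (True # bs)) + (\<Sum>bs\<in>bool_lists n. ?g (False # bs))"
    by (simp add: map_tensor_diff_left[OF Tdiff pq] sum.distrib[symmetric] length_bool_lists
        split_factor_def cong: sum.cong)
  also have "\<dots> = (\<Sum>bs\<in>Cons True ` bool_lists n. ?g bs) + (\<Sum>bs\<in>Cons False ` bool_lists n. ?g bs)"
    by (simp add: sum.reindex)
  also have "\<dots> = (\<Sum>bs\<in>bool_lists (Suc n). ?g bs)"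
    by (simp only: bool_lists.simps, rule sum.union_disjoint[symmetric]) auto
  finally show ?case .
qed

datatype factor = Keep | Apply | Deviate

fun factor_map :: "(complex mat \<Rightarrow> complex mat) \<Rightarrow> factor \<Rightarrow> complex mat \<Rightarrow> complex mat" where
  "factor_map T Keep = (\<lambda>X. X)"
| "factor_map T Apply = T"
| "factor_map T Deviate = (\<lambda>X. T X - X)"

lemma channel_factor_map: "channel d d T \<Longrightarrow> k \<noteq> Deviate \<Longrightarrow> channel d d (factor_map T k)"
  by (cases k) (simp_all add: channel_id)

lemma length_filter_list_update:
  "i < length xs \<Longrightarrow> length (filter P (xs[i:=v])) + (if P (xs!i) then 1 else 0)
     = length (filter P xs) + (if P v then 1 else 0)"
proof (induction xs arbitrary: i)
  case (Cons x xs)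
  then show ?case by (cases i) auto
qed simp

lemma corrects_without_deviation:
  assumes T: "channel d d T" and C: "corrects d m n f E D" and X: "X \<in> carrier_mat (d^m) (d^m)"
    and ks: "length ks = n" "Deviate \<notin> set ks" "length (filter (\<lambda>k. k \<noteq> Keep) ks) \<le> f"
  shows "E (tensor_list d (map (factor_map T) ks) (D X)) = X"
proof -
  let ?Ts = "map (factor_map T) ks"
  have "\<forall>S\<in>set ?Ts. channel d d S"
  proof
    fix S assume "S \<in> set ?Ts"
    then obtain k where "k \<in> set ks" "S = factor_map T k" by auto
    moreover have "k \<noteq> Deviate" using \<open>k \<in> set ks\<close> ks(2) by auto
    ultimately show "channel d d S" using channel_factor_map[OF T] by simp
  qed
  moreover have "card {i. i < n \<and> \<not> (\<forall>A\<in>carrier_mat d d. (?Ts ! i) A = A)} \<le> f"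
  proof -
    have "{i. i < n \<and> \<not> (\<forall>A\<in>carrier_mat d d. (?Ts ! i) A = A)} \<subseteq> {i. i < length ks \<and> ks ! i \<noteq> Keep}"
      using ks(1) by auto
    then have "card {i. i < n \<and> \<not> (\<forall>A\<in>carrier_mat d d. (?Ts ! i) A = A)} \<le> card {i. i < length ks \<and> ks ! i \<noteq> Keep}"
      by (intro card_mono) auto
    also have "\<dots> = length (filter (\<lambda>k. k \<noteq> Keep) ks)" by (simp add: length_filter_conv_card)
    finally show ?thesis using ks(3) by linarith
  qed
  ultimately show ?thesis using C X ks(1) unfolding corrects_def by auto
qed

lemma tensor_list_deviation_split:
  assumes Tc: "\<And>X. X \<in> carrier_mat d d \<Longrightarrow> T X \<in> carrier_mat d d"
    and i: "i < length ks" "ks ! i = Deviate" and pq: "p < d^length ks" "q < d^length ks"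
  shows "tensor_list d (map (factor_map T) ks) Y $$ (p,q) =
    tensor_list d (map (factor_map T) (ks[i:=Apply])) Y $$ (p,q) - tensor_list d (map (factor_map T) (ks[i:=Keep])) Y $$ (p,q)"
proof -
  have split: "(map (factor_map T) ks)[i := (\<lambda>X. T X - X)] = map (factor_map T) ks"
    "(map (factor_map T) ks)[i := T] = map (factor_map T) (ks[i:=Apply])"
    "(map (factor_map T) ks)[i := (\<lambda>X. X)] = map (factor_map T) (ks[i:=Keep])"
    using i list_update_id[of "map (factor_map T) ks" i] by (simp_all add: map_update)
  have "tensor_list d ((map (factor_map T) ks)[i := (\<lambda>X. T X - X)]) Y $$ (p,q) =
      tensor_list d ((map (factor_map T) ks)[i := T]) Y $$ (p,q)
      - tensor_list d ((map (factor_map T) ks)[i := (\<lambda>X. X)]) Y $$ (p,q)"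
    using pq i Tc by (intro tensor_list_update_diff) auto
  then show ?thesis unfolding split .
qed

lemma corrects_deviation_vanishes:
  assumes T: "channel d d T" and E: "channel (d^n) (d^m) E" and D: "channel (d^m) (d^n) D"
    and C: "corrects d m n f E D" and X: "X \<in> carrier_mat (d^m) (d^m)" and pq: "p < d^m" "q < d^m"
  shows "length ks = n \<Longrightarrow> length (filter (\<lambda>k. k \<noteq> Keep) ks) \<le> f \<Longrightarrow>
    E (tensor_list d (map (factor_map T) ks) (D X)) $$ (p,q) = (if Deviate \<in> set ks then 0 else X $$ (p,q))"
proof (induction "length (filter (\<lambda>k. k = Deviate) ks)" arbitrary: ks rule: less_induct)
  case less
  have Elin: "lin_map (d^n) (d^m) E" using E unfolding channel_def by simp
  have Tc: "\<And>X. X \<in> carrier_mat d d \<Longrightarrow> T X \<in> carrier_mat d d"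
    using T unfolding channel_def lin_map_def by simp
  have DX: "D X \<in> carrier_mat (d^n) (d^n)" using D X unfolding channel_def lin_map_def by simp
  have TLc: "tensor_list d (map (factor_map T) ks') (D X) \<in> carrier_mat (d^n) (d^n)" if "length ks' = n" for ks'
    using tensor_list_carrier[of "D X" d "map (factor_map T) ks'"] DX that by simp
  show ?case
  proof (cases "Deviate \<in> set ks")
    case False
    then show ?thesis using corrects_without_deviation[OF T C X less.prems(1) False less.prems(2)] by simp
  next
    case True
    then obtain i where i: "i < length ks" "ks ! i = Deviate" by (auto simp: in_set_conv_nth)
    let ?ks1 = "ks[i:=Apply]" and ?ks0 = "ks[i:=Keep]"
    have IH: "E (tensor_list d (map (factor_map T) (ks[i:=v])) (D X)) $$ (p,q) =
        (if Deviate \<in> set (ks[i:=v]) then 0 else X $$ (p,q))" if v: "v \<noteq> Deviate" for v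
    proof (rule less.hyps)
      show "length (filter (\<lambda>k. k = Deviate) (ks[i:=v])) < length (filter (\<lambda>k. k = Deviate) ks)"
        using length_filter_list_update[OF i(1), of "\<lambda>k. k = Deviate" v] i v by simp
      show "length (filter (\<lambda>k. k \<noteq> Keep) (ks[i:=v])) \<le> f"
        using length_filter_list_update[OF i(1), of "\<lambda>k. k \<noteq> Keep" v] i less.prems(2)
        by (simp split: if_splits)
    qed (use less.prems(1) in simp)
    have same: "Deviate \<in> set ?ks1 \<longleftrightarrow> Deviate \<in> set ?ks0"
      using i(1) by (auto simp: in_set_conv_nth nth_list_update)
    have entry: "tensor_list d (map (factor_map T) ks) (D X) $$ (a,b) =
        tensor_list d (map (factor_map T) ?ks1) (D X) $$ (a,b) - tensor_list d (map (factor_map T) ?ks0) (D X) $$ (a,b)"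
      if "a < d^n" "b < d^n" for a b
      using that less.prems(1) by (intro tensor_list_deviation_split[OF Tc i]) simp_all
    have "E (tensor_list d (map (factor_map T) ks) (D X)) $$ (p,q) =
        E (tensor_list d (map (factor_map T) ?ks1) (D X)) $$ (p,q) - E (tensor_list d (map (factor_map T) ?ks0) (D X)) $$ (p,q)"
      by (rule lin_map_entry_diff[OF Elin TLc TLc TLc entry pq]) (use less.prems(1) in simp_all)
    then show ?thesis using IH same True by simp
  qed
qed

lemma decoded_tensor_pow_expand:
  assumes T: "channel d d T" and E: "channel (d^n) (d^m) E" and DX: "D X \<in> carrier_mat (d^n) (d^n)"
    and pq: "p < d^m" "q < d^m"
  shows "E (tensor_pow d T n (D X)) $$ (p,q) =
    (\<Sum>bs\<in>bool_lists n. E (tensor_list d (map (split_factor T) bs) (D X)) $$ (p,q))"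
proof -
  have Elin: "lin_map (d^n) (d^m) E" using E unfolding channel_def by simp
  have Tc: "\<And>X. X \<in> carrier_mat d d \<Longrightarrow> T X \<in> carrier_mat d d"
    using T unfolding channel_def lin_map_def by simp
  have Yc: "tensor_pow d T n (D X) \<in> carrier_mat (d^n) (d^n)"
    unfolding tensor_pow_def using tensor_list_carrier[of "D X" d "replicate n T"] DX by simp
  have TLc: "tensor_list d (map (split_factor T) bs) (D X) \<in> carrier_mat (d^n) (d^n)"
    if "bs \<in> bool_lists n" for bs
    using tensor_list_carrier[of "D X" d "map (split_factor T) bs"] DX that by (simp add: length_bool_lists)
  show ?thesis
  proof (rule lin_map_entry_sum[OF Elin Yc TLc _ pq])
    fix a b assume ab: "a < d^n" "b < d^n"
    show "tensor_pow d T n (D X) $$ (a,b) =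
        (\<Sum>bs\<in>bool_lists n. tensor_list d (map (split_factor T) bs) (D X) $$ (a,b))"
      unfolding tensor_pow_def by (rule tensor_pow_expand[OF Tc ab])
  qed
qed

lemma decoded_low_weight_term:
  assumes T: "channel d d T" and E: "channel (d^n) (d^m) E" and D: "channel (d^m) (d^n) D"
    and C: "corrects d m n f E D" and X: "X \<in> carrier_mat (d^m) (d^m)" and pq: "p < d^m" "q < d^m"
    and bs: "length bs = n" "count_list bs True \<le> f"
  shows "E (tensor_list d (map (split_factor T) bs) (D X)) $$ (p,q) =
    (if bs = replicate n False then X $$ (p,q) else 0)"
proof -
  let ?ks = "map (\<lambda>b. if b then Deviate else Keep) bs"
  have ks: "map (factor_map T) ?ks = map (split_factor T) bs" by (auto simp: split_factor_def)
  have "length (filter (\<lambda>k. k \<noteq> Keep) ?ks) = count_list bs True"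
    by (induction bs) auto
  then have "E (tensor_list d (map (factor_map T) ?ks) (D X)) $$ (p,q) =
      (if Deviate \<in> set ?ks then 0 else X $$ (p,q))"
    using bs by (intro corrects_deviation_vanishes[OF T E D C X pq]) simp_all
  moreover have "Deviate \<in> set ?ks \<longleftrightarrow> True \<in> set bs" by auto
  moreover have "True \<in> set bs \<longleftrightarrow> bs \<noteq> replicate n False"
    using bs(1) by (auto simp: replicate_length_same[symmetric] in_set_conv_nth list_eq_iff_nth_eq)
  ultimately show ?thesis unfolding ks by simp
qed

lemma decoded_error_expansion:
  assumes T: "channel d d T" and E: "channel (d^n) (d^m) E" and D: "channel (d^m) (d^n) D"
    and C: "corrects d m n f E D" and X: "X \<in> carrier_mat (d^m) (d^m)" and pq: "p < d^m" "q < d^m"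
  shows "E (tensor_pow d T n (D X)) $$ (p,q) - X $$ (p,q) =
    (\<Sum>bs\<in>{bs\<in>bool_lists n. f+1 \<le> count_list bs True}. E (tensor_list d (map (split_factor T) bs) (D X)) $$ (p,q))"
proof -
  let ?g = "\<lambda>bs. E (tensor_list d (map (split_factor T) bs) (D X)) $$ (p,q)"
  let ?high = "{bs\<in>bool_lists n. f+1 \<le> count_list bs True}" and ?low = "{bs\<in>bool_lists n. \<not> f+1 \<le> count_list bs True}"
  have DX: "D X \<in> carrier_mat (d^n) (d^n)" using D X unfolding channel_def lin_map_def by simp
  have "(\<Sum>bs\<in>?low. ?g bs) = (\<Sum>bs\<in>?low. if bs = replicate n False then X $$ (p,q) else 0)"
    by (intro sum.cong refl decoded_low_weight_term[OF T E D C X pq]) (auto simp: length_bool_lists)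
  also have "\<dots> = X $$ (p,q)"
    by (simp add: sum.delta' bool_lists_memI)
  moreover have "(\<Sum>bs\<in>bool_lists n. ?g bs) = (\<Sum>bs\<in>?high \<union> ?low. ?g bs)"
    by (rule sum.cong) auto
  moreover have "\<dots> = (\<Sum>bs\<in>?high. ?g bs) + (\<Sum>bs\<in>?low. ?g bs)"
    by (rule sum.union_disjoint) auto
  ultimately show ?thesis
    unfolding decoded_tensor_pow_expand[of d T n m E D X, OF T E DX pq] by simp
qed

lemma cb_bounded_error_term:
  assumes T: "channel d d T" and E: "channel (d^n) (d^m) E" and D: "channel (d^m) (d^n) D"
    and x: "cb_bounded d d (\<lambda>X. T X - X) x" "0 \<le> x" and bs: "length bs = n"
  shows "cb_bounded (d^m) (d^m) (\<lambda>X. E (tensor_list d (map (split_factor T) bs) (D X))) (x ^ count_list bs True)"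
proof -
  let ?Ps = "map (\<lambda>b. (split_factor T b, if b then x else 1)) bs"
  have "\<And>L c. (L, c) \<in> set ?Ps \<Longrightarrow> cb_bounded d d L c \<and> 0 \<le> c"
    using x cb_bounded_id by (auto simp: split_factor_def)
  then have "cb_bounded (d^length ?Ps) (d^length ?Ps) (tensor_list d (map fst ?Ps)) (prod_list (map snd ?Ps))"
    by (rule cb_bounded_tensor_list)
  moreover have "map fst ?Ps = map (split_factor T) bs" "prod_list (map snd ?Ps) = x ^ count_list bs True"
    by (induction bs) auto
  ultimately have TL: "cb_bounded (d^n) (d^n) (tensor_list d (map (split_factor T) bs)) (x ^ count_list bs True)"
    using bs by (simp only: length_map)
  have TLlin: "lin_map (d^n) (d^n) (tensor_list d (map (split_factor T) bs))"
    using lin_map_tensor_list[of d "map (split_factor T) bs"] bs by simp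
  have Dc: "\<And>X. X \<in> carrier_mat (d^m) (d^m) \<Longrightarrow> D X \<in> carrier_mat (d^n) (d^n)"
    using D unfolding channel_def lin_map_def by simp
  have Elin: "lin_map (d^n) (d^m) E" using E unfolding channel_def by simp
  have TLDc: "tensor_list d (map (split_factor T) bs) (D X) \<in> carrier_mat (d^n) (d^n)"
    if "X \<in> carrier_mat (d^m) (d^m)" for X
    using TLlin Dc[OF that] unfolding lin_map_def by blast
  have inner: "cb_bounded (d^m) (d^n) (\<lambda>X. tensor_list d (map (split_factor T) bs) (D X)) (x ^ count_list bs True * 1)"
    by (rule cb_bounded_comp[OF TLlin TL zero_le_power[OF x(2)] Dc cb_bounded_channel[OF D]])
  have "cb_bounded (d^m) (d^m) (\<lambda>X. E (tensor_list d (map (split_factor T) bs) (D X))) (1 * (x ^ count_list bs True * 1))"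
    by (rule cb_bounded_comp[OF Elin cb_bounded_channel[OF E] zero_le_one TLDc inner])
  then show ?thesis by simp
qed

lemma cb_norm_decoded_error_le:
  assumes T: "channel d d T" and E: "channel (d^n) (d^m) E" and D: "channel (d^m) (d^n) D"
    and C: "corrects d m n f E D"
  shows "cb_norm (d^m) (d^m) (\<lambda>X. E (tensor_pow d T n (D X)) - X)
     \<le> (\<Sum>bs\<in>{bs\<in>bool_lists n. f+1 \<le> count_list bs True}. cb_norm d d (\<lambda>X. T X - X) ^ count_list bs True)"
proof -
  let ?x = "cb_norm d d (\<lambda>X. T X - X)"
  note x = cb_bounded_channel_minus_id[OF T]
  show ?thesis
  proof (rule cb_norm_le_sum)
    fix bs assume "bs \<in> {bs\<in>bool_lists n. f+1 \<le> count_list bs True}"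
    then show "cb_bounded (d^m) (d^m) (\<lambda>X. E (tensor_list d (map (split_factor T) bs) (D X))) (?x ^ count_list bs True)"
      by (intro cb_bounded_error_term[OF T E D x]) (simp add: length_bool_lists)
  next
    fix X :: "complex mat" and p q assume X: "X \<in> carrier_mat (d^m) (d^m)" and pq: "p < d^m" "q < d^m"
    have "(E (tensor_pow d T n (D X)) - X) $$ (p,q) = E (tensor_pow d T n (D X)) $$ (p,q) - X $$ (p,q)"
      using X pq by simp
    then show "(E (tensor_pow d T n (D X)) - X) $$ (p,q) =
        (\<Sum>bs\<in>{bs\<in>bool_lists n. f+1 \<le> count_list bs True}. E (tensor_list d (map (split_factor T) bs) (D X)) $$ (p,q))"
      by (simp only: decoded_error_expansion[OF T E D C X pq])
  qed (use x in auto)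
qed

section \<open>Binomial tail estimate\<close>

lemma sum_bool_lists_count_list:
  "(\<Sum>bs\<in>bool_lists n. g (count_list bs True)) = (\<Sum>j\<le>n. real (n choose j) * g j)"
proof (induction n arbitrary: g)
  case 0
  then show ?case by simp
next
  case (Suc n)
  have "(\<Sum>bs\<in>bool_lists (Suc n). g (count_list bs True))
      = (\<Sum>bs\<in>bool_lists n. g (Suc (count_list bs True))) + (\<Sum>bs\<in>bool_lists n. g (count_list bs True))"
  proof -
    have "(\<Sum>bs\<in>bool_lists (Suc n). g (count_list bs True))
        = (\<Sum>bs\<in>Cons True ` bool_lists n. g (count_list bs True)) + (\<Sum>bs\<in>Cons False ` bool_lists n. g (count_list bs True))"
      by (simp only: bool_lists.simps, rule sum.union_disjoint) auto
    then show ?thesis by (simp add: sum.reindex)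
  qed
  also have "\<dots> = (\<Sum>j\<le>n. real (n choose j) * g (Suc j)) + (\<Sum>j\<le>n. real (n choose j) * g j)"
    using Suc.IH[of "\<lambda>j. g (Suc j)"] Suc.IH[of g] by simp
  also have "(\<Sum>j\<le>n. real (n choose j) * g j) = g 0 + (\<Sum>j\<le>n. real (n choose Suc j) * g (Suc j))"
  proof -
    have "(\<Sum>j\<le>Suc n. real (n choose j) * g j) = (\<Sum>j\<le>n. real (n choose j) * g j)"
      by (simp add: sum.atMost_Suc)
    moreover have "(\<Sum>j\<le>Suc n. real (n choose j) * g j) = g 0 + (\<Sum>j\<le>n. real (n choose Suc j) * g (Suc j))"
      unfolding sum.atMost_Suc_shift by simp
    ultimately show ?thesis by (simp add: binomial_eq_0)
  qed
  also have "(\<Sum>j\<le>n. real (n choose j) * g (Suc j)) + (g 0 + (\<Sum>j\<le>n. real (n choose Suc j) * g (Suc j)))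
      = (\<Sum>j\<le>Suc n. real (Suc n choose j) * g j)"
    unfolding sum.atMost_Suc_shift by (simp add: sum.distrib[symmetric] algebra_simps)
  finally show ?case .
qed

lemma binomial_tail_le_shifted:
  fixes x y :: real
  assumes x0: "0 \<le> x" and xy: "x \<le> y"
  shows "(\<Sum>j\<le>n. real (n choose j) * (if q \<le> j then x^j else 0))
    \<le> x^q * (\<Sum>j\<le>n. real (n choose j) * (if q \<le> j then y^(j-q) else 0))"
  unfolding sum_distrib_left
proof (intro sum_mono)
  fix j assume "j \<in> {..n}"
  show "real (n choose j) * (if q \<le> j then x^j else 0) \<le> x^q * (real (n choose j) * (if q \<le> j then y^(j-q) else 0))"
  proof (cases "q \<le> j")
    case True
    have "x^j = x^q * x^(j-q)" using True by (simp add: power_add[symmetric])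
    also have "\<dots> \<le> x^q * y^(j-q)" using x0 xy by (intro mult_left_mono power_mono) auto
    finally have "real (n choose j) * x^j \<le> real (n choose j) * (x^q * y^(j-q))"
      by (intro mult_left_mono) auto
    then show ?thesis using True by (simp add: mult.left_commute)
  qed simp
qed

text \<open>Chernoff's trick: for \<open>j \<ge> q\<close>, \<open>x ^ j \<le> x ^ q * y ^ (j - q)\<close> with \<open>y = q/(n-q)\<close>,
  and the full binomial sum in \<open>y\<close> is \<open>(1 + y) ^ n\<close>.\<close>

lemma binomial_tail_le:
  fixes x :: real and n q :: nat
  assumes qn: "q < n" and q1: "1 \<le> q" and x0: "0 \<le> x" and xy: "x \<le> real q / (real n - real q)"
  shows "(\<Sum>j\<le>n. real (n choose j) * (if q \<le> j then x^j else 0))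
     \<le> x^q * ((real n / real q)^q * (real n / (real n - real q))^(n-q))"
proof -
  define y where "y = real q / (real n - real q)"
  have nq: "0 < real n - real q" using qn by simp
  have y0: "0 < y" unfolding y_def using q1 nq by simp
  define S where "S = (\<Sum>j\<le>n. real (n choose j) * (if q \<le> j then y^(j-q) else 0))"
  have "(\<Sum>j\<le>n. real (n choose j) * (if q \<le> j then x^j else 0)) \<le> x^q * S"
    unfolding S_def y_def by (rule binomial_tail_le_shifted[OF x0 xy])
  moreover have "y^q * S \<le> y^q * ((real n / real q)^q * (real n / (real n - real q))^(n-q))"
  proof -
    have "y^q * S = (\<Sum>j\<le>n. real (n choose j) * (if q \<le> j then y^j else 0))"
      unfolding S_def sum_distrib_left
      by (intro sum.cong refl) (auto simp: power_add[symmetric] mult.left_commute)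
    also have "\<dots> \<le> (\<Sum>j\<le>n. real (n choose j) * y^j)"
      using y0 by (intro sum_mono) auto
    also have "\<dots> = (1 + y)^n" using binomial_ring[of y 1 n] by (simp add: add.commute mult.commute)
    also have "1 + y = real n / (real n - real q)" unfolding y_def using nq by (simp add: field_simps)
    also have "(real n / (real n - real q))^n
        = (y * (real n / real q))^q * (real n / (real n - real q))^(n-q)"
      using qn q1 nq by (simp add: y_def power_add[symmetric])
    finally show ?thesis by (simp only: power_mult_distrib mult.assoc)
  qed
  then have "S \<le> (real n / real q)^q * (real n / (real n - real q))^(n-q)"
    using y0 by (simp add: mult_le_cancel_left_pos)
  ultimately show ?thesis using x0 by (meson mult_left_mono order_trans zero_le_power)
qed

lemma powr_H2_eq:
  fixes n q :: nat
  assumes q1: "1 \<le> q" and qn: "q < n"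
  shows "2 powr (real n * H2 (real q / real n)) = (real n / real q)^q * (real n / (real n - real q))^(n-q)"
proof -
  have n0: "0 < real n" and nq: "0 < real n - real q" and q0: "0 < real q" using q1 qn by simp_all
  have powr_log: "2 powr (c * log 2 z) = z powr c" if "0 < z" for c z :: real
  proof -
    have "z powr c = (2 powr (log 2 z)) powr c" using that by simp
    also have "\<dots> = 2 powr (log 2 z * c)" by (rule powr_powr)
    finally show ?thesis by (simp add: mult.commute)
  qed
  have "real n * H2 (real q / real n)
      = real q * log 2 (real n / real q) + (real n - real q) * log 2 (real n / (real n - real q))"
  proof -
    have "1 - real q / real n = (real n - real q) / real n" using n0 by (simp add: field_simps)
    moreover have "log 2 (real q / real n) = - log 2 (real n / real q)"
      "log 2 ((real n - real q) / real n) = - log 2 (real n / (real n - real q))"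
      using n0 q0 nq by (simp_all add: log_divide)
    ultimately show ?thesis unfolding H2_def using n0 by (simp add: field_simps)
  qed
  then have "2 powr (real n * H2 (real q / real n)) =
      (real n / real q) powr (real q) * (real n / (real n - real q)) powr (real n - real q)"
    using n0 q0 nq by (simp add: powr_add powr_log)
  also have "\<dots> = (real n / real q)^q * (real n / (real n - real q))^(n-q)"
    using n0 q0 nq qn by (simp add: powr_realpow[symmetric] of_nat_diff)
  finally show ?thesis .
qed

lemma binomial_tail_le_entropy:
  fixes n f :: nat and x :: real
  assumes fn: "f + 1 \<le> n" and x0: "0 \<le> x"
    and xb: "f + 1 < n \<longrightarrow> x \<le> real (f + 1) / (real n - real f - 1)"
  shows "(\<Sum>j\<le>n. real (n choose j) * (if f+1 \<le> j then x^j else 0))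
    \<le> x ^ (f + 1) * 2 powr (real n * H2 (real (f + 1) / real n))"
proof (cases "f + 1 < n")
  case True
  have "real n - real f - 1 = real n - real (f+1)" by simp
  then have "x \<le> real (f+1) / (real n - real (f+1))" using xb True by metis
  then have "(\<Sum>j\<le>n. real (n choose j) * (if f+1 \<le> j then x^j else 0))
      \<le> x^(f+1) * ((real n / real (f+1))^(f+1) * (real n / (real n - real (f+1)))^(n-(f+1)))"
    by (intro binomial_tail_le[OF True _ x0]) simp
  then show ?thesis using powr_H2_eq[of "f+1" n] True by simp
next
  case False
  then have nf: "n = f + 1" using fn by simp
  have "(\<Sum>j\<le>n. real (n choose j) * (if f+1 \<le> j then x^j else 0)) = x^n"
    unfolding nf by (simp add: sum.atMost_Suc)
  moreover have "H2 (real (f + 1) / real n) = 0" unfolding nf H2_def by simp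
  ultimately show ?thesis using nf by simp
qed

theorem proposition2:
  fixes d m n f :: nat and T E D :: "complex mat \<Rightarrow> complex mat"
  assumes "channel d d T"
    and "channel (d^n) (d^m) E"
    and "channel (d^m) (d^n) D"
    and "corrects d m n f E D"
    and "f + 1 \<le> n"
    and "f + 1 < n \<longrightarrow>
           cb_norm d d (\<lambda>X. T X - X) \<le> real (f + 1) / (real n - real f - 1)"
  shows "cb_norm (d^m) (d^m) (\<lambda>X. E (tensor_pow d T n (D X)) - X)
           \<le> cb_norm d d (\<lambda>X. T X - X) ^ (f + 1) * 2 powr (real n * H2 (real (f + 1) / real n))"
proof -
  let ?x = "cb_norm d d (\<lambda>X. T X - X)"
  have "cb_norm (d^m) (d^m) (\<lambda>X. E (tensor_pow d T n (D X)) - X)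
      \<le> (\<Sum>bs\<in>{bs\<in>bool_lists n. f+1 \<le> count_list bs True}. ?x ^ count_list bs True)"
    by (rule cb_norm_decoded_error_le[OF assms(1-4)])
  also have "\<dots> = (\<Sum>bs\<in>bool_lists n. (\<lambda>j. if f+1 \<le> j then ?x^j else 0) (count_list bs True))"
    by (simp add: sum.inter_filter)
  also have "\<dots> = (\<Sum>j\<le>n. real (n choose j) * (if f+1 \<le> j then ?x^j else 0))"
    by (rule sum_bool_lists_count_list)
  also have "\<dots> \<le> ?x ^ (f + 1) * 2 powr (real n * H2 (real (f + 1) / real n))"
    by (rule binomial_tail_le_entropy[OF assms(5) cb_bounded_channel_minus_id(2)[OF assms(1)] assms(6)])
  finally show ?thesis .
qed

end
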